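(* Let $L\ge1$, $d,k,m$ be positive integers with $m>\max\{d,k\}$, $a_0=d$, $a_L=k$, $a_\ell=m$ for $1\le\ell\le L-1$, let $\mathbf W^\ell\in\mathbb R^{a_\ell\times a_{\ell-1}}$ for $\ell=1,\dots,L$, let $\beta\in\mathbb R$, and let $\boldsymbol\Sigma\in\mathbb R^{d\times d}$ be symmetric positive definite. Define $$\widehat{\mathbf G}_O^\beta=\sum_{\ell=1}^L\big(\mathbf W_\beta^{L:\ell+1}\mathbf W_\beta^{\ell+1:L}\big)\otimes\big(\boldsymbol\Sigma^{1/2}\mathbf W_\beta^{1:\ell-1}\mathbf W_\beta^{\ell-1:1}\boldsymbol\Sigma^{1/2}\big).$$ Assume $\alpha_\ell^\beta:=\sigma_{\min}^2(\mathbf W_\beta^{L:\ell+1})\,\sigma_{\min}^2(\mathbf W_\beta^{1:\ell-1})>0$ for all $\ell$, and let $\gamma_\ell^\beta=\alpha_\ell^\beta/\sum_{i=1}^L\alpha_i^\beta$. Then $\widehat{\mathbf G}_O^\beta$ is positive definite and $$\kappa(\widehat{\mathbf G}_O^\beta)\le\kappa(\boldsymbol\Sigma)\sum_{\ell=1}^L\gamma_\ell^\beta\,\kappa^2(\mathbf W_\beta^{L:\ell+1})\,\kappa^2(\mathbf W_\beta^{1:\ell-1})\le\kappa(\boldsymbol\Sigma)\max_{1\le\ell\le L}\kappa^2(\mathbf W_\beta^{L:\ell+1})\,\kappa^2(\mathbf W_\beta^{1:\ell-1}).$$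
   Context: Here $\mathbf I$ denotes the rectangular identity of the appropriate size ($a_\ell\times a_{\ell-1}$, ones on the main diagonal, zeros elsewhere), so $\mathbf W^\ell+\beta\mathbf I$ is the $\ell$-th layer of the linear residual network $F(\mathbf x)=(\mathbf W^L+\beta\mathbf I)\cdots(\mathbf W^1+\beta\mathbf I)\mathbf x$. For $i>j$, $\mathbf W_\beta^{i:j}=(\mathbf W^i+\beta\mathbf I)\cdots(\mathbf W^j+\beta\mathbf I)$; for $i<j$, $\mathbf W_\beta^{i:j}=(\mathbf W^i+\beta\mathbf I)^\top\cdots(\mathbf W^j+\beta\mathbf I)^\top$; empty products are identities ($\mathbf I_k$ for $\ell=L$ in the first factor, $\mathbf I_d$ for $\ell=1$ in the second). $\boldsymbol\Sigma^{1/2}$ is the positive semidefinite square root, $\otimes$ the Kronecker product. For symmetric positive definite $\mathbf A$, $\kappa(\mathbf A)=\lambda_{\max}/\lambda_{\min}$; for rectangular $\mathbf A\in\mathbb R^{p\times q}$, $\sigma_{\min}(\mathbf A)$ is the $\min(p,q)$-th largest singular value and $\kappa(\mathbf A)=\sigma_{\max}(\mathbf A)/\sigma_{\min}(\mathbf A)$. *)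

theory Defs
  imports "Jordan_Normal_Form.Char_Poly"
begin

definition rect_id :: "nat \<Rightarrow> nat \<Rightarrow> real mat" where
  "rect_id p q = mat p q (\<lambda>(i,j). if i = j then 1 else 0)"

definition widths :: "nat \<Rightarrow> nat \<Rightarrow> nat \<Rightarrow> nat \<Rightarrow> nat \<Rightarrow> nat" where
  "widths L d k m l = (if l = 0 then d else if l = L then k else m)"

definition layer :: "(nat \<Rightarrow> nat) \<Rightarrow> (nat \<Rightarrow> real mat) \<Rightarrow> real \<Rightarrow> nat \<Rightarrow> real mat" where
  "layer a W \<beta> l = W l + \<beta> \<cdot>\<^sub>m rect_id (a l) (a (l - 1))"

(* W_beta^{i:j} for i >= j-1: (W^i + beta I) ... (W^j + beta I); the empty product
   (i = j - 1) is the identity of size a_{j-1} = a_i. *)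
definition Wdown :: "(nat \<Rightarrow> nat) \<Rightarrow> (nat \<Rightarrow> real mat) \<Rightarrow> real \<Rightarrow> nat \<Rightarrow> nat \<Rightarrow> real mat" where
  "Wdown a W \<beta> i j = foldr (\<lambda>l acc. layer a W \<beta> l * acc) (rev [j..<Suc i]) (1\<^sub>m (a (j - 1)))"

(* W_beta^{i:j} for i <= j+1: (W^i + beta I)^T ... (W^j + beta I)^T; the empty product
   (i = j + 1) is the identity of size a_j. *)
definition Wup :: "(nat \<Rightarrow> nat) \<Rightarrow> (nat \<Rightarrow> real mat) \<Rightarrow> real \<Rightarrow> nat \<Rightarrow> nat \<Rightarrow> real mat" where
  "Wup a W \<beta> i j = foldr (\<lambda>l acc. transpose_mat (layer a W \<beta> l) * acc) [i..<Suc j] (1\<^sub>m (a j))"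

definition positive_semidefinite :: "nat \<Rightarrow> real mat \<Rightarrow> bool" where
  "positive_semidefinite n A \<longleftrightarrow> A \<in> carrier_mat n n \<and> transpose_mat A = A \<and>
     (\<forall>x \<in> carrier_vec n. x \<bullet> (A *\<^sub>v x) \<ge> 0)"

definition positive_definite :: "nat \<Rightarrow> real mat \<Rightarrow> bool" where
  "positive_definite n A \<longleftrightarrow> A \<in> carrier_mat n n \<and> transpose_mat A = A \<and>
     (\<forall>x \<in> carrier_vec n. x \<noteq> 0\<^sub>v n \<longrightarrow> x \<bullet> (A *\<^sub>v x) > 0)"

definition psd_sqrt :: "nat \<Rightarrow> real mat \<Rightarrow> real mat" where
  "psd_sqrt n A = (THE S. positive_semidefinite n S \<and> S * S = A)"

definition kron :: "real mat \<Rightarrow> real mat \<Rightarrow> real mat" where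
  "kron A B = mat (dim_row A * dim_row B) (dim_col A * dim_col B)
     (\<lambda>(i,j). A $$ (i div dim_row B, j div dim_col B) * B $$ (i mod dim_row B, j mod dim_col B))"

definition lambda_max :: "real mat \<Rightarrow> real" where
  "lambda_max A = Max {x. eigenvalue A x}"

definition lambda_min :: "real mat \<Rightarrow> real" where
  "lambda_min A = Min {x. eigenvalue A x}"

definition kappa_spd :: "real mat \<Rightarrow> real" where
  "kappa_spd A = lambda_max A / lambda_min A"

(* The
   min(p,q)-th largest singular value of A (p x q) is the square root of the smallest
   eigenvalue of the smaller Gram matrix (A^T A if p >= q, A A^T if p < q). *)
definition sigma_max :: "real mat \<Rightarrow> real" where
  "sigma_max A = sqrt (lambda_max (transpose_mat A * A))"

definition sigma_min :: "real mat \<Rightarrow> real" where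
  "sigma_min A = sqrt (lambda_min (if dim_row A \<ge> dim_col A then transpose_mat A * A
                                    else A * transpose_mat A))"

definition kappa_rect :: "real mat \<Rightarrow> real" where
  "kappa_rect A = sigma_max A / sigma_min A"

end

theory Submission
  imports Defs "Jordan_Normal_Form.Spectral_Radius"
begin

text \<open>
  Each summand of \<open>G\<close> is a Kronecker product \<open>A \<otimes> C\<close> of positive semidefinite matrices,
  \<open>A = P P\<^sup>T\<close> and \<open>C = S Q Q\<^sup>T S\<close> with \<open>S = \<Sigma>^(1/2)\<close>, \<open>P = W^(L:l+1)\<close> and \<open>Q = W^(1:l-1)\<close>.
  Diagonalizing \<open>C\<close> orthogonally splits the quadratic form of \<open>A \<otimes> C\<close> into quadratic forms of
  \<open>A\<close> weighted by the eigenvalues of \<open>C\<close>, so its Rayleigh quotients lie between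
  \<open>\<lambda>_min(A) \<lambda>_min(Q Q\<^sup>T) \<lambda>_min(\<Sigma>)\<close> and the corresponding product of largest eigenvalues.
  Summing over \<open>l\<close> bounds the spectrum of \<open>G\<close>. Since \<open>m > max d k\<close>, every \<open>P\<close> and \<open>Q\<close> is wide
  or an identity, so \<open>\<lambda>_min(P P\<^sup>T) = \<sigma>_min(P)\<^sup>2\<close> and \<open>\<lambda>_max(P P\<^sup>T) \<le> \<sigma>_max(P)\<^sup>2\<close>. The resulting
  ratio of sums is then the \<open>\<gamma>\<close>-weighted average of the products of squared condition numbers,
  hence at most their maximum.
\<close>

section \<open>Orthogonal diagonalization of real symmetric matrices\<close>

lemma conjugate_real_vec [simp]: "conjugate (v :: real vec) = v"
  by (rule eq_vecI) auto

lemma scalar_prod_self_nonneg: "0 \<le> (v :: real vec) \<bullet> v"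
  using conjugate_square_ge_0_vec[of v] by simp

lemma scalar_prod_self_pos:
  "(v :: real vec) \<in> carrier_vec n \<Longrightarrow> v \<noteq> 0\<^sub>v n \<Longrightarrow> 0 < v \<bullet> v"
  using conjugate_square_eq_0_vec[of v n] scalar_prod_self_nonneg[of v] by fastforce

lemma scalar_prod_self_sum: "(v :: real vec) \<bullet> v = (\<Sum>i = 0..<dim_vec v. (v $ i)\<^sup>2)"
  unfolding scalar_prod_def by (simp add: power2_eq_square)

lemma index_mult_mat_vec_sum:
  "A \<in> carrier_mat nr nc \<Longrightarrow> v \<in> carrier_vec nc \<Longrightarrow> i < nr \<Longrightarrow>
    (A *\<^sub>v v) $ i = (\<Sum>j = 0..<nc. A $$ (i, j) * v $ j)"
  by (auto simp: scalar_prod_def)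

lemma scalar_prod_symmetric_mat:
  fixes M :: "real mat"
  assumes "M \<in> carrier_mat n n" "transpose_mat M = M" "x \<in> carrier_vec n" "y \<in> carrier_vec n"
  shows "x \<bullet> (M *\<^sub>v y) = (M *\<^sub>v x) \<bullet> y"
  using transpose_vec_mult_scalar[of M n n y x] assms by simp

lemma mult_mat_vec_Re_Im:
  fixes M :: "real mat"
  assumes "M \<in> carrier_mat n n" "w \<in> carrier_vec n"
  shows "map_vec Re (map_mat complex_of_real M *\<^sub>v w) = M *\<^sub>v map_vec Re w"
    and "map_vec Im (map_mat complex_of_real M *\<^sub>v w) = M *\<^sub>v map_vec Im w"
  using assms by (auto simp: scalar_prod_def)

lemma symmetric_real_eigenvector:
  fixes M :: "real mat"
  assumes M: "M \<in> carrier_mat n n" and sym: "transpose_mat M = M" and n: "0 < n"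
  obtains e v where "v \<in> carrier_vec n" "v \<noteq> 0\<^sub>v n" "M *\<^sub>v v = e \<cdot>\<^sub>v v"
proof -
  let ?Mc = "map_mat complex_of_real M"
  have Mc: "?Mc \<in> carrier_mat n n" using M by auto
  from spectrum_non_empty[OF Mc n] obtain z where "eigenvalue ?Mc z"
    unfolding spectrum_def by auto
  then obtain w where w: "w \<in> carrier_vec n" "w \<noteq> 0\<^sub>v n" "?Mc *\<^sub>v w = z \<cdot>\<^sub>v w"
    using Mc unfolding eigenvalue_def eigenvector_def by auto
  define a where "a = map_vec Re w"
  define b where "b = map_vec Im w"
  have a: "a \<in> carrier_vec n" and b: "b \<in> carrier_vec n" using w(1) by (auto simp: a_def b_def)
  have Ma: "M *\<^sub>v a = Re z \<cdot>\<^sub>v a - Im z \<cdot>\<^sub>v b"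
    unfolding a_def mult_mat_vec_Re_Im(1)[OF M w(1), symmetric] w(3)
    using w(1) by (auto simp: b_def)
  have Mb: "M *\<^sub>v b = Re z \<cdot>\<^sub>v b + Im z \<cdot>\<^sub>v a"
    unfolding b_def mult_mat_vec_Re_Im(2)[OF M w(1), symmetric] w(3)
    using w(1) by (auto simp: a_def)
  have "a \<bullet> (M *\<^sub>v b) = (M *\<^sub>v a) \<bullet> b" by (rule scalar_prod_symmetric_mat[OF M sym a b])
  hence "Im z * (a \<bullet> a + b \<bullet> b) = 0"
    unfolding Ma Mb using a b
    by (simp add: scalar_prod_add_distrib[of _ n] minus_scalar_prod_distrib[of _ n]
        comm_scalar_prod[of a n b] algebra_simps)
  moreover have ab: "a \<noteq> 0\<^sub>v n \<or> b \<noteq> 0\<^sub>v n"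
    using w(1,2) by (auto simp: a_def b_def complex_eq_iff vec_eq_iff)
  hence "0 < a \<bullet> a + b \<bullet> b"
    using scalar_prod_self_pos[OF a] scalar_prod_self_pos[OF b]
      scalar_prod_self_nonneg[of a] scalar_prod_self_nonneg[of b] by force
  ultimately have "Im z = 0" by simp
  with Ma Mb a b have "M *\<^sub>v a = Re z \<cdot>\<^sub>v a" "M *\<^sub>v b = Re z \<cdot>\<^sub>v b" by auto
  with ab a b that show thesis by blast
qed

definition orthogonal_matrix :: "nat \<Rightarrow> real mat \<Rightarrow> bool" where
  "orthogonal_matrix n U \<longleftrightarrow>
     U \<in> carrier_mat n n \<and> transpose_mat U * U = 1\<^sub>m n \<and> U * transpose_mat U = 1\<^sub>m n"

definition orth_diagonalization :: "nat \<Rightarrow> real mat \<Rightarrow> real mat \<Rightarrow> real mat \<Rightarrow> bool" where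
  "orth_diagonalization n M U D \<longleftrightarrow>
     orthogonal_matrix n U \<and> D \<in> carrier_mat n n \<and> diagonal_mat D \<and> M = U * D * transpose_mat U"

lemma orthogonal_matrix_mult:
  assumes "orthogonal_matrix n U" "orthogonal_matrix n V"
  shows "orthogonal_matrix n (U * V)"
proof -
  have U: "U \<in> carrier_mat n n" and V: "V \<in> carrier_mat n n" using assms by (auto simp: orthogonal_matrix_def)
  have UT: "transpose_mat (U * V) = transpose_mat V * transpose_mat U" by (rule transpose_mult[OF U V])
  note assoc = assoc_mult_mat[of _ n n _ n _ n]
  have "transpose_mat (U * V) * (U * V) = transpose_mat V * (transpose_mat U * U) * V"
    unfolding UT using U V by (simp add: assoc)
  moreover have "U * V * transpose_mat (U * V) = U * (V * transpose_mat V) * transpose_mat U"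
    unfolding UT using U V by (simp add: assoc)
  ultimately show ?thesis using assms U V by (simp add: orthogonal_matrix_def)
qed

lemma orthogonal_matrix_first_column:
  fixes v :: "real vec"
  assumes v: "v \<in> carrier_vec n" and v1: "v \<bullet> v = 1"
  obtains U where "orthogonal_matrix n U" "col U 0 = v"
proof -
  have v0: "v \<noteq> 0\<^sub>v n" using v1 v by auto
  have n: "0 < n" using v0 v by (cases n) auto
  interpret cof_vec_space n "TYPE(real)" .
  define b where "b = basis_completion v"
  from basis_completion[OF v v0, folded b_def]
  have dist_b: "distinct b" and indep: "\<not> lin_dep (set b)" and bc: "set b \<subseteq> carrier_vec n"
    and hdb: "hd b = v" and len_b: "length b = n" by auto
  from hdb len_b n obtain vs where bv: "b = v # vs" by (cases b) auto
  define ws where "ws = gram_schmidt n b"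
  from gram_schmidt_result[OF bc dist_b indep ws_def]
  have wsc: "set ws \<subseteq> carrier_vec n" and orth: "corthogonal ws" and len: "length ws = n"
    by (auto simp: len_b)
  have "hd ws = v" unfolding ws_def bv using gram_schmidt_hd[OF v] by simp
  hence ws0: "ws ! 0 = v" using len n by (cases ws) auto
  define us where "us = map (\<lambda>w. (1 / sqrt (w \<bullet> w)) \<cdot>\<^sub>v w) ws"
  have usc: "set us \<subseteq> carrier_vec n" and lus: "length us = n" using wsc len by (auto simp: us_def)
  have us_orth: "us ! i \<bullet> us ! j = (if i = j then 1 else 0)" if "i < n" "j < n" for i j
  proof -
    have ws: "ws ! i \<in> carrier_vec n" "ws ! j \<in> carrier_vec n" using wsc that len by auto
    have "ws ! i \<bullet> ws ! j = 0 \<longleftrightarrow> i \<noteq> j" using corthogonalD[OF orth, of i j] that len by simp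
    moreover have "0 \<le> ws ! i \<bullet> ws ! i" by (rule scalar_prod_self_nonneg)
    ultimately show ?thesis using that ws len
      by (auto simp: us_def real_sqrt_mult[symmetric])
  qed
  define U where "U = mat_of_cols n us"
  have U: "U \<in> carrier_mat n n" unfolding U_def using lus by auto
  have colU: "col U i = us ! i" if "i < n" for i
    unfolding U_def using that lus usc by (intro col_mat_of_cols) auto
  have UU: "transpose_mat U * U = 1\<^sub>m n" using U colU us_orth by (intro eq_matI) auto
  have "U * transpose_mat U = 1\<^sub>m n" by (rule mat_mult_left_right_inverse[OF _ U UU]) (use U in auto)
  with U UU have "orthogonal_matrix n U" by (simp add: orthogonal_matrix_def)
  moreover have "col U 0 = v" using colU[OF n] ws0 v1 len n by (simp add: us_def)
  ultimately show thesis by (rule that)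
qed

lemma orth_diagonalization_conj:
  assumes W: "orthogonal_matrix n W" and A: "orth_diagonalization n A U D"
  shows "orth_diagonalization n (W * A * transpose_mat W) (W * U) D"
proof -
  have Wc: "W \<in> carrier_mat n n" and Uc: "U \<in> carrier_mat n n" and Dc: "D \<in> carrier_mat n n"
    using assms by (auto simp: orth_diagonalization_def orthogonal_matrix_def)
  have "W * A * transpose_mat W = (W * U) * D * (transpose_mat U * transpose_mat W)"
    using A Wc Uc Dc by (simp add: orth_diagonalization_def assoc_mult_mat[of _ n n _ n _ n])
  also have "transpose_mat U * transpose_mat W = transpose_mat (W * U)"
    by (rule transpose_mult[OF Wc Uc, symmetric])
  finally show ?thesis
    using assms orthogonal_matrix_mult by (auto simp: orth_diagonalization_def)
qed

lemma orth_diagonalization_four_block: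
  fixes e :: real
  assumes A: "orth_diagonalization n A U D"
  defines "E \<equiv> mat 1 1 (\<lambda>_. e)"
  shows "orth_diagonalization (Suc n) (four_block_mat E (0\<^sub>m 1 n) (0\<^sub>m n 1) A)
    (four_block_mat (1\<^sub>m 1) (0\<^sub>m 1 n) (0\<^sub>m n 1) U) (four_block_mat E (0\<^sub>m 1 n) (0\<^sub>m n 1) D)"
proof -
  have U: "U \<in> carrier_mat n n" and D: "D \<in> carrier_mat n n" and E: "E \<in> carrier_mat 1 1"
    and UU: "transpose_mat U * U = 1\<^sub>m n" and UU': "U * transpose_mat U = 1\<^sub>m n"
    and dD: "diagonal_mat D" and AU: "A = U * D * transpose_mat U"
    using A by (auto simp: orth_diagonalization_def orthogonal_matrix_def E_def)
  define B where "B = four_block_mat (1\<^sub>m 1) (0\<^sub>m 1 n) (0\<^sub>m n 1) U"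
  have B: "B \<in> carrier_mat (Suc n) (Suc n)" unfolding B_def using U
    using four_block_carrier_mat[of "1\<^sub>m 1" 1 1 U n n] by simp
  have BT: "transpose_mat B = four_block_mat (1\<^sub>m 1) (0\<^sub>m 1 n) (0\<^sub>m n 1) (transpose_mat U)"
    unfolding B_def by (subst transpose_four_block_mat[of _ 1 1 _ n _ n]) (use U in auto)
  note mult_block = mult_four_block_mat[of _ 1 1 _ n _ n _ _ 1 _ n]
  have "transpose_mat B * B = 1\<^sub>m (Suc n)" "B * transpose_mat B = 1\<^sub>m (Suc n)"
    unfolding BT unfolding B_def by (subst mult_block; use U UU UU' in auto)+
  hence "orthogonal_matrix (Suc n) B" using B by (simp add: orthogonal_matrix_def)
  moreover have "four_block_mat E (0\<^sub>m 1 n) (0\<^sub>m n 1) A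
      = B * four_block_mat E (0\<^sub>m 1 n) (0\<^sub>m n 1) D * transpose_mat B"
    unfolding BT unfolding B_def AU
    by (subst mult_block, use U D E in auto, subst mult_block, use U D E in auto)
  moreover have "diagonal_mat (four_block_mat E (0\<^sub>m 1 n) (0\<^sub>m n 1) D)"
    using D E dD by (auto simp: diagonal_mat_def E_def)
  moreover have "four_block_mat E (0\<^sub>m 1 n) (0\<^sub>m n 1) D \<in> carrier_mat (Suc n) (Suc n)"
    using four_block_carrier_mat[OF E D] by simp
  ultimately show ?thesis unfolding orth_diagonalization_def B_def by blast
qed

lemma orthogonal_eigenvector_block:
  fixes M :: "real mat"
  assumes M: "M \<in> carrier_mat (Suc n) (Suc n)" and sym: "transpose_mat M = M"
    and W: "orthogonal_matrix (Suc n) W" and W0: "col W 0 = v" and Mv: "M *\<^sub>v v = e \<cdot>\<^sub>v v"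
  defines "A \<equiv> mat n n (\<lambda>(i, j). (transpose_mat W * M * W) $$ (Suc i, Suc j))"
  shows "transpose_mat W * M * W = four_block_mat (mat 1 1 (\<lambda>_. e)) (0\<^sub>m 1 n) (0\<^sub>m n 1) A"
    and "transpose_mat A = A"
proof -
  have Wc: "W \<in> carrier_mat (Suc n) (Suc n)" and WW: "transpose_mat W * W = 1\<^sub>m (Suc n)"
    using W by (auto simp: orthogonal_matrix_def)
  define A' where "A' = transpose_mat W * M * W"
  have A': "A' \<in> carrier_mat (Suc n) (Suc n)" unfolding A'_def using Wc M by auto
  have "transpose_mat A' = transpose_mat W * transpose_mat (transpose_mat W * M)"
    unfolding A'_def by (rule transpose_mult) (use Wc M in auto)
  also have "transpose_mat (transpose_mat W * M) = transpose_mat M * W"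
    by (subst transpose_mult[of _ "Suc n" "Suc n" _ "Suc n"]) (use Wc M in auto)
  finally have "transpose_mat A' = A'"
    unfolding sym A'_def using Wc M by (simp add: assoc_mult_mat[of _ "Suc n" "Suc n" _ "Suc n" _ "Suc n"])
  hence A'sym: "A' $$ (j, i) = A' $$ (i, j)" if "i < Suc n" "j < Suc n" for i j
    using that A' sym by (metis carrier_matD index_transpose_mat(1))
  have A'0: "A' $$ (i, 0) = (if i = 0 then e else 0)" if i: "i < Suc n" for i
  proof -
    have "A' = transpose_mat W * (M * W)"
      unfolding A'_def by (rule assoc_mult_mat) (use Wc M in auto)
    hence "A' $$ (i, 0) = col W i \<bullet> col (M * W) 0" using Wc M i by simp
    moreover have "col (M * W) 0 = e \<cdot>\<^sub>v col W 0"
      unfolding Mv[folded W0, symmetric] by (rule col_mult2) (use Wc M in auto)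
    moreover have "col W i \<bullet> (e \<cdot>\<^sub>v col W 0) = e * (transpose_mat W * W) $$ (i, 0)"
      using Wc i by simp
    ultimately show ?thesis unfolding WW using i by simp
  qed
  show "transpose_mat A = A" unfolding A_def A'_def[symmetric] using A'sym by (auto intro: eq_matI)
  show "transpose_mat W * M * W = four_block_mat (mat 1 1 (\<lambda>_. e)) (0\<^sub>m 1 n) (0\<^sub>m n 1) A"
    unfolding A_def A'_def[symmetric]
  proof (rule eq_matI)
    fix i j assume "i < dim_row (four_block_mat (mat 1 1 (\<lambda>_. e)) (0\<^sub>m 1 n) (0\<^sub>m n 1)
      (mat n n (\<lambda>(i, j). A' $$ (Suc i, Suc j))))" "j < dim_col (four_block_mat (mat 1 1 (\<lambda>_. e))
      (0\<^sub>m 1 n) (0\<^sub>m n 1) (mat n n (\<lambda>(i, j). A' $$ (Suc i, Suc j))))"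
    hence i: "i < Suc n" and j: "j < Suc n" by auto
    show "A' $$ (i, j) = four_block_mat (mat 1 1 (\<lambda>_. e)) (0\<^sub>m 1 n) (0\<^sub>m n 1)
      (mat n n (\<lambda>(i, j). A' $$ (Suc i, Suc j))) $$ (i, j)"
      using A'0[OF i] A'0[OF j] A'sym[OF i j] i j by (cases i; cases j) auto
  qed (use A' in auto)
qed

theorem symmetric_orth_diagonalization:
  fixes M :: "real mat"
  assumes "M \<in> carrier_mat n n" "transpose_mat M = M"
  obtains U D where "orth_diagonalization n M U D"
  using assms
proof (induction n arbitrary: M thesis)
  case 0
  have "orth_diagonalization 0 M (1\<^sub>m 0) M"
    using 0 by (auto simp: orth_diagonalization_def orthogonal_matrix_def diagonal_mat_def)
  with 0 show ?case by blast
next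
  case (Suc n M)
  note M = Suc.prems(2) and sym = Suc.prems(3)
  obtain e v0 where v0: "v0 \<in> carrier_vec (Suc n)" "v0 \<noteq> 0\<^sub>v (Suc n)" "M *\<^sub>v v0 = e \<cdot>\<^sub>v v0"
    using symmetric_real_eigenvector[OF M sym] by blast
  define v where "v = (1 / sqrt (v0 \<bullet> v0)) \<cdot>\<^sub>v v0"
  have p: "0 < v0 \<bullet> v0" by (rule scalar_prod_self_pos[OF v0(1,2)])
  have v: "v \<in> carrier_vec (Suc n)" and v1: "v \<bullet> v = 1"
    unfolding v_def using v0(1) p by (auto simp: real_sqrt_mult[symmetric])
  have Mv: "M *\<^sub>v v = e \<cdot>\<^sub>v v" unfolding v_def using v0 M
    by (simp add: mult_mat_vec[of _ "Suc n" "Suc n"] smult_smult_assoc mult.commute)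
  obtain W where W: "orthogonal_matrix (Suc n) W" and W0: "col W 0 = v"
    using orthogonal_matrix_first_column[OF v v1] by blast
  define A where "A = mat n n (\<lambda>(i, j). (transpose_mat W * M * W) $$ (Suc i, Suc j))"
  note block = orthogonal_eigenvector_block[OF M sym W W0 Mv, folded A_def]
  obtain U D where "orth_diagonalization n A U D"
    using Suc.IH[OF _ _ block(2)] by (auto simp: A_def)
  have "W * (transpose_mat W * M * W) * transpose_mat W
      = (W * transpose_mat W) * M * (W * transpose_mat W)"
    using M W[unfolded orthogonal_matrix_def, THEN conjunct1]
    by (simp add: assoc_mult_mat[of _ "Suc n" "Suc n" _ "Suc n" _ "Suc n"])
  also have "\<dots> = M" using W M by (simp add: orthogonal_matrix_def)
  finally have "W * (transpose_mat W * M * W) * transpose_mat W = M" .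
  with orth_diagonalization_conj[OF W orth_diagonalization_four_block[OF \<open>orth_diagonalization n A U D\<close>]]
  show ?case using Suc.prems(1) unfolding block(1) by blast
qed

lemma diagonal_mult_vec_index:
  assumes "D \<in> carrier_mat n n" "diagonal_mat D" "y \<in> carrier_vec n" "i < n"
  shows "(D *\<^sub>v y) $ i = D $$ (i, i) * y $ i"
proof -
  have "(D *\<^sub>v y) $ i = (\<Sum>j \<in> {i}. D $$ (i, j) * y $ j)"
    unfolding index_mult_mat_vec_sum[OF assms(1,3,4)]
    by (rule sum.mono_neutral_right) (use assms in \<open>auto simp: diagonal_mat_def\<close>)
  thus ?thesis by simp
qed

lemma orthogonal_matrix_transpose_norm:
  assumes "orthogonal_matrix n U" "x \<in> carrier_vec n"
  shows "(transpose_mat U *\<^sub>v x) \<bullet> (transpose_mat U *\<^sub>v x) = x \<bullet> x"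
proof -
  have U: "U \<in> carrier_mat n n" and UU': "U * transpose_mat U = 1\<^sub>m n"
    using assms by (auto simp: orthogonal_matrix_def)
  have "(transpose_mat U *\<^sub>v x) \<bullet> (transpose_mat U *\<^sub>v x) = x \<bullet> ((U * transpose_mat U) *\<^sub>v x)"
    using transpose_vec_mult_scalar[OF U _ assms(2), of "transpose_mat U *\<^sub>v x"] U assms(2) by auto
  thus ?thesis unfolding UU' using assms(2) by simp
qed

lemma orth_diagonalization_bilinear:
  assumes M: "orth_diagonalization n M U D" and x: "x \<in> carrier_vec n" and y: "y \<in> carrier_vec n"
  shows "x \<bullet> (M *\<^sub>v y) =
    (\<Sum>q = 0..<n. D $$ (q, q) * (transpose_mat U *\<^sub>v x) $ q * (transpose_mat U *\<^sub>v y) $ q)"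
proof -
  have U: "U \<in> carrier_mat n n" and D: "D \<in> carrier_mat n n" and dD: "diagonal_mat D"
    and MU: "M = U * D * transpose_mat U" using M by (auto simp: orth_diagonalization_def orthogonal_matrix_def)
  define x' where "x' = transpose_mat U *\<^sub>v x"
  define y' where "y' = transpose_mat U *\<^sub>v y"
  have x': "x' \<in> carrier_vec n" and y': "y' \<in> carrier_vec n" using U x y by (auto simp: x'_def y'_def)
  have "M *\<^sub>v y = U *\<^sub>v (D *\<^sub>v y')" unfolding MU y'_def using U D y
    by (simp add: assoc_mult_mat_vec[of _ n n _ n])
  hence "x \<bullet> (M *\<^sub>v y) = x' \<bullet> (D *\<^sub>v y')"
    using transpose_vec_mult_scalar[OF U _ x, of "D *\<^sub>v y'"] D y' by (auto simp: x'_def)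
  also have "\<dots> = (\<Sum>q = 0..<n. D $$ (q, q) * x' $ q * y' $ q)"
    unfolding scalar_prod_def using D diagonal_mult_vec_index[OF D dD y'] by (auto intro: sum.cong)
  finally show ?thesis unfolding x'_def y'_def .
qed

lemma orth_diagonalization_eigenvalue_diag:
  assumes M: "orth_diagonalization n M U D" and i: "i < n"
  shows "eigenvalue M (D $$ (i, i))"
proof -
  have U: "U \<in> carrier_mat n n" and D: "D \<in> carrier_mat n n" and dD: "diagonal_mat D"
    and UU: "transpose_mat U * U = 1\<^sub>m n" and MU: "M = U * D * transpose_mat U"
    using M by (auto simp: orth_diagonalization_def orthogonal_matrix_def)
  define v where "v = col U i"
  have v: "v \<in> carrier_vec n" unfolding v_def using U by auto
  have "transpose_mat U *\<^sub>v v = col (transpose_mat U * U) i"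
    unfolding v_def by (rule col_mult2[symmetric]) (use U i in auto)
  hence Utv: "transpose_mat U *\<^sub>v v = unit_vec n i" unfolding UU using i by simp
  have "v \<bullet> v = (transpose_mat U * U) $$ (i, i)" unfolding v_def using U i by simp
  hence "v \<noteq> 0\<^sub>v n" unfolding UU using i by auto
  have Du: "D *\<^sub>v unit_vec n i = D $$ (i, i) \<cdot>\<^sub>v unit_vec n i"
    using diagonal_mult_vec_index[OF D dD] D i by (auto simp: unit_vec_def)
  have "M *\<^sub>v v = U *\<^sub>v (D *\<^sub>v (transpose_mat U *\<^sub>v v))" unfolding MU using U D v
    by (simp add: assoc_mult_mat_vec[of _ n n _ n])
  also have "\<dots> = D $$ (i, i) \<cdot>\<^sub>v (U *\<^sub>v unit_vec n i)"
    unfolding Utv Du using U by (simp add: mult_mat_vec[of _ n n])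
  also have "U *\<^sub>v unit_vec n i = v" unfolding v_def using U i by (intro eq_vecI) auto
  finally have "eigenvector M v (D $$ (i, i))"
    unfolding eigenvector_def using v \<open>v \<noteq> 0\<^sub>v n\<close> U D MU by auto
  thus ?thesis unfolding eigenvalue_def by blast
qed

lemma orth_diagonalization_eigenvalue_cases:
  assumes M: "orth_diagonalization n M U D" and e: "eigenvalue M e"
  obtains i where "i < n" "e = D $$ (i, i)"
proof -
  have U: "U \<in> carrier_mat n n" and D: "D \<in> carrier_mat n n" and dD: "diagonal_mat D"
    and UU: "transpose_mat U * U = 1\<^sub>m n" and UU': "U * transpose_mat U = 1\<^sub>m n"
    and MU: "M = U * D * transpose_mat U"
    using M by (auto simp: orth_diagonalization_def orthogonal_matrix_def)
  have Mc: "M \<in> carrier_mat n n" unfolding MU using U D by auto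
  obtain v where v: "v \<in> carrier_vec n" "v \<noteq> 0\<^sub>v n" "M *\<^sub>v v = e \<cdot>\<^sub>v v"
    using e Mc unfolding eigenvalue_def eigenvector_def by auto
  define y where "y = transpose_mat U *\<^sub>v v"
  have y: "y \<in> carrier_vec n" unfolding y_def using U v by auto
  have "U *\<^sub>v y = (U * transpose_mat U) *\<^sub>v v" unfolding y_def using U v by auto
  hence "y \<noteq> 0\<^sub>v n" using v U UU' by auto
  then obtain i where i: "i < n" and yi: "y $ i \<noteq> 0" using y by (auto simp: vec_eq_iff)
  have "D *\<^sub>v y = (transpose_mat U * U) * D * transpose_mat U *\<^sub>v v"
    unfolding UU y_def using U D v by auto
  also have "\<dots> = transpose_mat U *\<^sub>v (M *\<^sub>v v)"
    unfolding MU using U D v by (simp add: assoc_mult_mat[of _ n n _ n _ n] assoc_mult_mat_vec[of _ n n _ n])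
  also have "\<dots> = e \<cdot>\<^sub>v y" unfolding v(3) y_def using U v by (simp add: mult_mat_vec[of _ n n])
  finally have "(D *\<^sub>v y) $ i = (e \<cdot>\<^sub>v y) $ i" by simp
  hence "D $$ (i, i) * y $ i = e * y $ i"
    unfolding diagonal_mult_vec_index[OF D dD y i] using i y by simp
  with yi i that show thesis by simp
qed

lemma eigenvalues_orth_diagonalization:
  "orth_diagonalization n M U D \<Longrightarrow> {e. eigenvalue M e} = (\<lambda>i. D $$ (i, i)) ` {0..<n}"
  by (auto elim: orth_diagonalization_eigenvalue_cases intro: orth_diagonalization_eigenvalue_diag)

lemma orth_diagonalization_symmetric:
  assumes "orth_diagonalization n M U D"
  shows "transpose_mat M = M"
proof -
  have U: "U \<in> carrier_mat n n" and D: "D \<in> carrier_mat n n" and dD: "diagonal_mat D"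
    and MU: "M = U * D * transpose_mat U"
    using assms by (auto simp: orth_diagonalization_def orthogonal_matrix_def)
  have "transpose_mat D = D"
  proof (rule eq_matI)
    fix i j assume "i < dim_row D" "j < dim_col D"
    thus "transpose_mat D $$ (i, j) = D $$ (i, j)"
      using D dD by (cases "i = j") (auto simp: diagonal_mat_def)
  qed (use D in auto)
  hence "transpose_mat M = U * (D * transpose_mat U)"
    unfolding MU using U D by (simp add: transpose_mult[of _ n n _ n])
  thus ?thesis unfolding MU using U D by (simp add: assoc_mult_mat[of _ n n _ n _ n])
qed

section \<open>Extreme eigenvalues and square roots\<close>

lemma
  fixes M :: "real mat"
  assumes M: "M \<in> carrier_mat n n" and sym: "transpose_mat M = M" and n: "0 < n"
  shows eigenvalue_lambda_min: "eigenvalue M (lambda_min M)"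
    and eigenvalue_lambda_max: "eigenvalue M (lambda_max M)"
    and lambda_min_le_eigenvalue: "eigenvalue M e \<Longrightarrow> lambda_min M \<le> e"
    and eigenvalue_le_lambda_max: "eigenvalue M e \<Longrightarrow> e \<le> lambda_max M"
proof -
  obtain U D where UD: "orth_diagonalization n M U D" using symmetric_orth_diagonalization[OF M sym] .
  have fin: "finite {e. eigenvalue M e}" and ne: "{e. eigenvalue M e} \<noteq> {}"
    using eigenvalues_orth_diagonalization[OF UD] n by auto
  show "eigenvalue M (lambda_min M)" "eigenvalue M (lambda_max M)"
    using Min_in[OF fin ne] Max_in[OF fin ne] by (auto simp: lambda_min_def lambda_max_def)
  show "eigenvalue M e \<Longrightarrow> lambda_min M \<le> e" "eigenvalue M e \<Longrightarrow> e \<le> lambda_max M"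
    using fin by (auto simp: lambda_min_def lambda_max_def)
qed

lemma lambda_min_le_lambda_max:
  fixes M :: "real mat"
  assumes "M \<in> carrier_mat n n" "transpose_mat M = M" "0 < n"
  shows "lambda_min M \<le> lambda_max M"
  using lambda_min_le_eigenvalue[OF assms eigenvalue_lambda_max[OF assms]] .

lemma rayleigh_quotient_bounds:
  fixes M :: "real mat"
  assumes M: "M \<in> carrier_mat n n" and sym: "transpose_mat M = M" and x: "x \<in> carrier_vec n"
  shows "lambda_min M * (x \<bullet> x) \<le> x \<bullet> (M *\<^sub>v x)" and "x \<bullet> (M *\<^sub>v x) \<le> lambda_max M * (x \<bullet> x)"
proof -
  obtain U D where UD: "orth_diagonalization n M U D" using symmetric_orth_diagonalization[OF M sym] .
  define y where "y = transpose_mat U *\<^sub>v x"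
  have U: "orthogonal_matrix n U" using UD by (simp add: orth_diagonalization_def)
  hence "dim_vec y = n" unfolding y_def using x by (auto simp: orthogonal_matrix_def)
  hence norm: "x \<bullet> x = (\<Sum>i = 0..<n. (y $ i)\<^sup>2)"
    using orthogonal_matrix_transpose_norm[OF U x, folded y_def] scalar_prod_self_sum[of y] by simp
  have quad: "x \<bullet> (M *\<^sub>v x) = (\<Sum>i = 0..<n. D $$ (i, i) * (y $ i)\<^sup>2)"
    unfolding orth_diagonalization_bilinear[OF UD x x] y_def by (simp add: power2_eq_square mult.assoc)
  have eig: "eigenvalue M (D $$ (i, i))" if "i < n" for i
    by (rule orth_diagonalization_eigenvalue_diag[OF UD that])
  show "lambda_min M * (x \<bullet> x) \<le> x \<bullet> (M *\<^sub>v x)" unfolding quad norm sum_distrib_left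
  proof (rule sum_mono)
    fix i assume "i \<in> {0..<n}"
    hence "lambda_min M \<le> D $$ (i, i)" using lambda_min_le_eigenvalue[OF M sym _ eig] by simp
    thus "lambda_min M * (y $ i)\<^sup>2 \<le> D $$ (i, i) * (y $ i)\<^sup>2" by (rule mult_right_mono) simp
  qed
  show "x \<bullet> (M *\<^sub>v x) \<le> lambda_max M * (x \<bullet> x)" unfolding quad norm sum_distrib_left
  proof (rule sum_mono)
    fix i assume "i \<in> {0..<n}"
    hence "D $$ (i, i) \<le> lambda_max M" using eigenvalue_le_lambda_max[OF M sym _ eig] by simp
    thus "D $$ (i, i) * (y $ i)\<^sup>2 \<le> lambda_max M * (y $ i)\<^sup>2" by (rule mult_right_mono) simp
  qed
qed

lemma eigenvalue_quadratic_form: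
  fixes M :: "real mat"
  assumes "M \<in> carrier_mat n n" "eigenvalue M e"
  obtains v where "v \<in> carrier_vec n" "0 < v \<bullet> v" "v \<bullet> (M *\<^sub>v v) = e * (v \<bullet> v)"
proof -
  obtain v where v: "v \<in> carrier_vec n" "v \<noteq> 0\<^sub>v n" "M *\<^sub>v v = e \<cdot>\<^sub>v v"
    using assms unfolding eigenvalue_def eigenvector_def by auto
  show thesis by (rule that[OF v(1) scalar_prod_self_pos[OF v(1,2)]]) (use v in simp)
qed

lemma
  fixes M :: "real mat"
  assumes M: "M \<in> carrier_mat n n" and e: "eigenvalue M e"
  shows eigenvalue_ge_quadratic_lower_bound:
      "(\<And>x. x \<in> carrier_vec n \<Longrightarrow> c * (x \<bullet> x) \<le> x \<bullet> (M *\<^sub>v x)) \<Longrightarrow> c \<le> e"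
    and eigenvalue_le_quadratic_upper_bound:
      "(\<And>x. x \<in> carrier_vec n \<Longrightarrow> x \<bullet> (M *\<^sub>v x) \<le> c * (x \<bullet> x)) \<Longrightarrow> e \<le> c"
proof -
  obtain v where v: "v \<in> carrier_vec n" "0 < v \<bullet> v" "v \<bullet> (M *\<^sub>v v) = e * (v \<bullet> v)"
    using eigenvalue_quadratic_form[OF M e] .
  show "c \<le> e" if "\<And>x. x \<in> carrier_vec n \<Longrightarrow> c * (x \<bullet> x) \<le> x \<bullet> (M *\<^sub>v x)"
    using that[OF v(1)] v(2,3) by simp
  show "e \<le> c" if "\<And>x. x \<in> carrier_vec n \<Longrightarrow> x \<bullet> (M *\<^sub>v x) \<le> c * (x \<bullet> x)"
    using that[OF v(1)] v(2,3) by simp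
qed

lemma positive_definite_imp_semidefinite:
  assumes "positive_definite n M"
  shows "positive_semidefinite n M"
proof -
  have "0 \<le> x \<bullet> (M *\<^sub>v x)" if "x \<in> carrier_vec n" for x
    using assms that by (cases "x = 0\<^sub>v n") (auto simp: positive_definite_def less_imp_le)
  thus ?thesis using assms by (simp add: positive_definite_def positive_semidefinite_def)
qed

lemma positive_semidefinite_eigenvalue_nonneg:
  "positive_semidefinite n M \<Longrightarrow> eigenvalue M e \<Longrightarrow> 0 \<le> e"
  by (rule eigenvalue_ge_quadratic_lower_bound) (auto simp: positive_semidefinite_def)

lemma positive_semidefinite_lambda_nonneg:
  assumes "positive_semidefinite n M" "0 < n"
  shows "0 \<le> lambda_min M" "0 \<le> lambda_max M"
proof -
  have M: "M \<in> carrier_mat n n" "transpose_mat M = M"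
    using assms(1) by (auto simp: positive_semidefinite_def)
  show "0 \<le> lambda_min M" "0 \<le> lambda_max M"
    using positive_semidefinite_eigenvalue_nonneg[OF assms(1)]
      eigenvalue_lambda_min[OF M assms(2)] eigenvalue_lambda_max[OF M assms(2)] by auto
qed

lemma positive_definite_lambda_min_pos:
  assumes pd: "positive_definite n M" and n: "0 < n"
  shows "0 < lambda_min M"
proof -
  have M: "M \<in> carrier_mat n n" "transpose_mat M = M" using pd by (auto simp: positive_definite_def)
  obtain v where v: "v \<in> carrier_vec n" "0 < v \<bullet> v" "v \<bullet> (M *\<^sub>v v) = lambda_min M * (v \<bullet> v)"
    using eigenvalue_quadratic_form[OF M(1) eigenvalue_lambda_min[OF M n]] .
  have "v \<noteq> 0\<^sub>v n" using v by auto
  hence "0 < v \<bullet> (M *\<^sub>v v)" using pd v(1) by (auto simp: positive_definite_def)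
  with v(2,3) show ?thesis by (simp add: zero_less_mult_iff)
qed

lemma gram_quadratic_form:
  fixes M :: "real mat"
  assumes "M \<in> carrier_mat p q" "x \<in> carrier_vec p"
  shows "x \<bullet> ((M * transpose_mat M) *\<^sub>v x) = (transpose_mat M *\<^sub>v x) \<bullet> (transpose_mat M *\<^sub>v x)"
  using transpose_vec_mult_scalar[of M p q "transpose_mat M *\<^sub>v x" x] assms by auto

lemma gram_positive_semidefinite:
  fixes M :: "real mat"
  assumes M: "M \<in> carrier_mat p q"
  shows "positive_semidefinite p (M * transpose_mat M)"
  unfolding positive_semidefinite_def
proof (intro conjI ballI)
  show "M * transpose_mat M \<in> carrier_mat p p" using M by auto
  show "transpose_mat (M * transpose_mat M) = M * transpose_mat M"
    using transpose_mult[of M p q "transpose_mat M" p] M by auto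
  show "0 \<le> x \<bullet> (M * transpose_mat M *\<^sub>v x)" if "x \<in> carrier_vec p" for x
    unfolding gram_quadratic_form[OF M that] by (rule scalar_prod_self_nonneg)
qed

lemma lambda_max_gram_le:
  fixes M :: "real mat"
  assumes M: "M \<in> carrier_mat p q" and p: "0 < p" and q: "0 < q"
  shows "lambda_max (M * transpose_mat M) \<le> lambda_max (transpose_mat M * M)"
proof -
  have P1: "positive_semidefinite p (M * transpose_mat M)" by (rule gram_positive_semidefinite[OF M])
  have P2: "positive_semidefinite q (transpose_mat M * M)"
    using gram_positive_semidefinite[of "transpose_mat M" q p] M by simp
  define e where "e = lambda_max (M * transpose_mat M)"
  show ?thesis
  proof (cases "0 < e")
    case False
    thus ?thesis using positive_semidefinite_lambda_nonneg(2)[OF P2 q] unfolding e_def by simp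
  next
    case True
    have "eigenvalue (M * transpose_mat M) e"
      unfolding e_def by (rule eigenvalue_lambda_max[OF _ _ p]) (use P1 in \<open>auto simp: positive_semidefinite_def\<close>)
    then obtain v where v: "v \<in> carrier_vec p" "v \<noteq> 0\<^sub>v p" "(M * transpose_mat M) *\<^sub>v v = e \<cdot>\<^sub>v v"
      unfolding eigenvalue_def eigenvector_def using M by auto
    define w where "w = transpose_mat M *\<^sub>v v"
    have w: "w \<in> carrier_vec q" unfolding w_def using M v by auto
    have Mw: "M *\<^sub>v w = e \<cdot>\<^sub>v v" unfolding w_def v(3)[symmetric] using M v by auto
    have "w \<noteq> 0\<^sub>v q"
    proof
      assume "w = 0\<^sub>v q"
      hence "e \<cdot>\<^sub>v v = M *\<^sub>v 0\<^sub>v q" using Mw by simp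
      also have "\<dots> = 0\<^sub>v p" using M by (intro eq_vecI) auto
      finally have "e \<cdot>\<^sub>v v = 0\<^sub>v p" .
      hence "e * (v \<bullet> v) = 0" using v by (metis scalar_prod_left_zero smult_scalar_prod_distrib)
      with True scalar_prod_self_pos[OF v(1,2)] show False by simp
    qed
    moreover have "(transpose_mat M * M) *\<^sub>v w = e \<cdot>\<^sub>v w"
      using M w v unfolding w_def[symmetric] by (simp add: Mw w_def mult_mat_vec[of _ q p])
    ultimately have "eigenvalue (transpose_mat M * M) e"
      unfolding eigenvalue_def eigenvector_def using w M by auto
    thus ?thesis unfolding e_def
      by (rule eigenvalue_le_lambda_max[rotated 3]) (use P2 q in \<open>auto simp: positive_semidefinite_def\<close>)
  qed
qed

lemma orth_diagonalization_positive_semidefinite: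
  assumes M: "orth_diagonalization n M U D" and nn: "\<And>i. i < n \<Longrightarrow> 0 \<le> D $$ (i, i)"
  shows "positive_semidefinite n M"
proof -
  have U: "U \<in> carrier_mat n n" and D: "D \<in> carrier_mat n n" and MU: "M = U * D * transpose_mat U"
    using M by (auto simp: orth_diagonalization_def orthogonal_matrix_def)
  have "0 \<le> x \<bullet> (M *\<^sub>v x)" if "x \<in> carrier_vec n" for x
    unfolding orth_diagonalization_bilinear[OF M that that] using nn
    by (auto intro!: sum_nonneg simp: mult.assoc)
  thus ?thesis using orth_diagonalization_symmetric[OF M] U D
    by (simp add: positive_semidefinite_def MU)
qed

lemma positive_semidefinite_sqrt_exists:
  fixes M :: "real mat"
  assumes psd: "positive_semidefinite n M"
  obtains S where "positive_semidefinite n S" "S * S = M"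
proof -
  have "M \<in> carrier_mat n n" "transpose_mat M = M" using psd by (auto simp: positive_semidefinite_def)
  then obtain U D where UD: "orth_diagonalization n M U D" by (rule symmetric_orth_diagonalization)
  have U: "U \<in> carrier_mat n n" and D: "D \<in> carrier_mat n n" and dD: "diagonal_mat D"
    and UU: "transpose_mat U * U = 1\<^sub>m n" and MU: "M = U * D * transpose_mat U"
    using UD by (auto simp: orth_diagonalization_def orthogonal_matrix_def)
  have nn: "0 \<le> D $$ (i, i)" if "i < n" for i
    by (rule positive_semidefinite_eigenvalue_nonneg[OF psd orth_diagonalization_eigenvalue_diag[OF UD that]])
  define Q where "Q = mat n n (\<lambda>(i, j). if i = j then sqrt (D $$ (i, i)) else 0)"
  have Q: "Q \<in> carrier_mat n n" and dQ: "diagonal_mat Q"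
    by (auto simp: Q_def diagonal_mat_def)
  have QQ: "Q * Q = D"
  proof (rule eq_matI)
    fix i j assume "i < dim_row D" "j < dim_col D"
    hence i: "i < n" and j: "j < n" using D by auto
    have "(Q * Q) $$ (i, j) = (\<Sum>k = 0..<n. Q $$ (i, k) * Q $$ (k, j))"
      using Q i j by (simp add: scalar_prod_def)
    also have "\<dots> = (\<Sum>k \<in> {i}. Q $$ (i, k) * Q $$ (k, j))"
      by (rule sum.mono_neutral_right) (use i j in \<open>auto simp: Q_def\<close>)
    finally show "(Q * Q) $$ (i, j) = D $$ (i, j)" using i j nn[OF i] D dD by (auto simp: Q_def diagonal_mat_def)
  qed (use Q D in auto)
  define S where "S = U * Q * transpose_mat U"
  have SQ: "orth_diagonalization n S U Q"
    using UD Q dQ by (simp add: orth_diagonalization_def S_def)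
  have "positive_semidefinite n S"
    by (rule orth_diagonalization_positive_semidefinite[OF SQ]) (use nn in \<open>simp add: Q_def\<close>)
  moreover have "S * S = U * (Q * (transpose_mat U * U) * Q) * transpose_mat U"
    unfolding S_def using U Q by (simp add: assoc_mult_mat[of _ n n _ n _ n])
  hence "S * S = M" unfolding UU MU using Q by (simp add: QQ)
  ultimately show thesis by (rule that)
qed

lemma positive_semidefinite_kernel:
  fixes S :: "real mat"
  assumes psd: "positive_semidefinite n S" and x: "x \<in> carrier_vec n" and q: "x \<bullet> (S *\<^sub>v x) = 0"
  shows "S *\<^sub>v x = 0\<^sub>v n"
proof -
  have "S \<in> carrier_mat n n" "transpose_mat S = S" using psd by (auto simp: positive_semidefinite_def)
  then obtain U D where UD: "orth_diagonalization n S U D" by (rule symmetric_orth_diagonalization)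
  have U: "U \<in> carrier_mat n n" and D: "D \<in> carrier_mat n n" and dD: "diagonal_mat D"
    and SU: "S = U * D * transpose_mat U"
    using UD by (auto simp: orth_diagonalization_def orthogonal_matrix_def)
  have nn: "0 \<le> D $$ (i, i)" if "i < n" for i
    by (rule positive_semidefinite_eigenvalue_nonneg[OF psd orth_diagonalization_eigenvalue_diag[OF UD that]])
  define y where "y = transpose_mat U *\<^sub>v x"
  have y: "y \<in> carrier_vec n" unfolding y_def using U x by auto
  have "(\<Sum>i = 0..<n. D $$ (i, i) * y $ i * y $ i) = 0"
    using q unfolding orth_diagonalization_bilinear[OF UD x x] y_def .
  hence "D $$ (i, i) * y $ i * y $ i = 0" if "i < n" for i
    using sum_nonneg_eq_0_iff[of "{0..<n}" "\<lambda>i. D $$ (i, i) * y $ i * y $ i"] nn that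
    by (simp add: mult.assoc)
  hence "D *\<^sub>v y = 0\<^sub>v n" using diagonal_mult_vec_index[OF D dD y] y D by (intro eq_vecI) auto
  moreover have "S *\<^sub>v x = U *\<^sub>v (D *\<^sub>v y)" unfolding SU y_def using U D x
    by (simp add: assoc_mult_mat_vec[of _ n n _ n])
  ultimately show ?thesis using U by auto
qed

lemma symmetric_eq_zero_if_eigenvalues_zero:
  fixes M :: "real mat"
  assumes M: "M \<in> carrier_mat n n" and sym: "transpose_mat M = M"
    and ev: "\<And>e. eigenvalue M e \<Longrightarrow> e = 0"
  shows "M = 0\<^sub>m n n"
proof -
  obtain U D where UD: "orth_diagonalization n M U D" using symmetric_orth_diagonalization[OF M sym] .
  have U: "U \<in> carrier_mat n n" and D: "D \<in> carrier_mat n n" and dD: "diagonal_mat D"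
    and MU: "M = U * D * transpose_mat U"
    using UD by (auto simp: orth_diagonalization_def orthogonal_matrix_def)
  have "D = 0\<^sub>m n n"
  proof (rule eq_matI)
    fix i j assume "i < dim_row (0\<^sub>m n n :: real mat)" "j < dim_col (0\<^sub>m n n :: real mat)"
    thus "D $$ (i, j) = 0\<^sub>m n n $$ (i, j)"
      using ev[OF orth_diagonalization_eigenvalue_diag[OF UD]] dD D
      by (cases "i = j") (auto simp: diagonal_mat_def)
  qed (use D in auto)
  thus ?thesis unfolding MU using U by simp
qed

lemma positive_semidefinite_same_square_eigenvalue_diff:
  fixes S T :: "real mat"
  assumes S: "positive_semidefinite n S" and T: "positive_semidefinite n T" and ST: "S * S = T * T"
    and ev: "eigenvalue (S - T) \<mu>"
  shows "\<mu> = 0"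
proof (rule ccontr)
  assume \<mu>: "\<mu> \<noteq> 0"
  have Sc: "S \<in> carrier_mat n n" and Ss: "transpose_mat S = S"
    and Tc: "T \<in> carrier_mat n n" and Ts: "transpose_mat T = T"
    using S T by (auto simp: positive_semidefinite_def)
  obtain w where w: "w \<in> carrier_vec n" "w \<noteq> 0\<^sub>v n" "(S - T) *\<^sub>v w = \<mu> \<cdot>\<^sub>v w"
    using ev Sc Tc unfolding eigenvalue_def eigenvector_def by auto
  define sw where "sw = S *\<^sub>v w"
  define tw where "tw = T *\<^sub>v w"
  have sw: "sw \<in> carrier_vec n" and tw: "tw \<in> carrier_vec n" using Sc Tc w by (auto simp: sw_def tw_def)
  have Dw: "\<mu> \<cdot>\<^sub>v w = sw - tw" unfolding w(3)[symmetric] sw_def tw_def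
    by (rule minus_mult_distrib_mat_vec[OF Sc Tc w(1)])
  have e1: "w \<bullet> (S *\<^sub>v sw) = sw \<bullet> sw" and e2: "w \<bullet> (S *\<^sub>v tw) = sw \<bullet> tw"
    using scalar_prod_symmetric_mat[OF Sc Ss w(1)] sw tw by (auto simp: sw_def)
  have "tw \<bullet> tw = w \<bullet> ((T * T) *\<^sub>v w)"
    using scalar_prod_symmetric_mat[OF Tc Ts w(1) tw] Tc w by (simp add: tw_def)
  also have "\<dots> = sw \<bullet> sw" unfolding ST[symmetric] using e1 Sc w by (simp add: sw_def)
  finally have e3: "tw \<bullet> tw = sw \<bullet> sw" .
  have "\<mu> * (w \<bullet> sw + w \<bullet> tw) = w \<bullet> (S *\<^sub>v (\<mu> \<cdot>\<^sub>v w)) + (\<mu> \<cdot>\<^sub>v w) \<bullet> tw"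
    using Sc w tw by (simp add: sw_def mult_mat_vec[of _ n n] algebra_simps)
  also have "\<dots> = 0" \<comment> \<open>it equals \<open>|S w|\<^sup>2 - |T w|\<^sup>2 = w \<bullet> (S\<^sup>2 - T\<^sup>2) w\<close>\<close>
    unfolding Dw using Sc w sw tw comm_scalar_prod[OF tw sw]
    by (simp add: mult_minus_distrib_mat_vec[OF Sc sw tw] scalar_prod_minus_distrib[of _ n]
        minus_scalar_prod_distrib[of _ n] e1 e2 e3)
  finally have "w \<bullet> sw + w \<bullet> tw = 0" using \<mu> by simp
  moreover have "0 \<le> w \<bullet> sw" "0 \<le> w \<bullet> tw"
    using S T w(1) by (auto simp: positive_semidefinite_def sw_def tw_def)
  ultimately have "sw = 0\<^sub>v n" "tw = 0\<^sub>v n"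
    using positive_semidefinite_kernel[OF S w(1)] positive_semidefinite_kernel[OF T w(1)]
    by (auto simp: sw_def tw_def)
  hence "(\<mu> \<cdot>\<^sub>v w) \<bullet> w = 0" using Dw w(1) by simp
  hence "\<mu> * (w \<bullet> w) = 0" using w(1) by simp
  with \<mu> scalar_prod_self_pos[OF w(1,2)] show False by simp
qed

lemma positive_semidefinite_sqrt_unique:
  fixes S T :: "real mat"
  assumes S: "positive_semidefinite n S" and T: "positive_semidefinite n T" and ST: "S * S = T * T"
  shows "S = T"
proof -
  have Sc: "S \<in> carrier_mat n n" and Ss: "transpose_mat S = S"
    and Tc: "T \<in> carrier_mat n n" and Ts: "transpose_mat T = T"
    using S T by (auto simp: positive_semidefinite_def)
  have "transpose_mat (S - T) = S - T"
    using Sc Tc Ss Ts by (metis transpose_minus)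
  hence "S - T = 0\<^sub>m n n"
    using Sc Tc positive_semidefinite_same_square_eigenvalue_diff[OF S T ST]
    by (intro symmetric_eq_zero_if_eigenvalues_zero) auto
  show ?thesis
  proof (rule eq_matI)
    fix i j assume "i < dim_row T" "j < dim_col T"
    thus "S $$ (i, j) = T $$ (i, j)"
      using arg_cong[OF \<open>S - T = 0\<^sub>m n n\<close>, of "\<lambda>A. A $$ (i, j)"] Sc Tc by simp
  qed (use Sc Tc in auto)
qed

lemma psd_sqrt:
  assumes "positive_semidefinite n M"
  shows "positive_semidefinite n (psd_sqrt n M)" and "psd_sqrt n M * psd_sqrt n M = M"
proof -
  obtain S where S: "positive_semidefinite n S" "S * S = M"
    using positive_semidefinite_sqrt_exists[OF assms] .
  have "psd_sqrt n M = S" unfolding psd_sqrt_def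
    by (rule the_equality) (use S positive_semidefinite_sqrt_unique in auto)
  with S show "positive_semidefinite n (psd_sqrt n M)" "psd_sqrt n M * psd_sqrt n M = M" by auto
qed

section \<open>Kronecker products\<close>

lemma sum_upt_mult_split:
  "(\<Sum>r = 0..<k * d. f r) = (\<Sum>i = 0..<k. \<Sum>j = 0..<d. f (i * d + j :: nat) :: real)"
proof (induction k)
  case (Suc k)
  have "(\<Sum>r = 0..<Suc k * d. f r) = (\<Sum>r = 0..<k * d. f r) + (\<Sum>r = k * d..<k * d + d. f r)"
    by (simp add: sum.atLeastLessThan_concat add.commute)
  also have "(\<Sum>r = k * d..<k * d + d. f r) = (\<Sum>j = 0..<d. f (k * d + j))"
    using sum.shift_bounds_nat_ivl[of f 0 "k * d" d] by (simp add: add.commute)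
  finally show ?case using Suc by simp
qed simp

lemma kron_carrier: "A \<in> carrier_mat k k \<Longrightarrow> C \<in> carrier_mat d d \<Longrightarrow> kron A C \<in> carrier_mat (k * d) (k * d)"
  unfolding kron_def by auto

lemma index_kron_blocks:
  assumes "A \<in> carrier_mat k k" "C \<in> carrier_mat d d" "i < k" "j < d" "i' < k" "j' < d"
  shows "kron A C $$ (i * d + j, i' * d + j') = A $$ (i, i') * C $$ (j, j')"
proof -
  have bound: "i * d + j < k * d" if "i < k" "j < d" for i j :: nat
  proof -
    have "i * d + j < Suc i * d" using that by simp
    also have "\<dots> \<le> k * d" using that by (intro mult_right_mono) auto
    finally show ?thesis .
  qed
  from bound[OF assms(3,4)] bound[OF assms(5,6)] show ?thesis using assms unfolding kron_def by simp
qed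

lemma kron_symmetric:
  fixes A C :: "real mat"
  assumes A: "A \<in> carrier_mat k k" "transpose_mat A = A" and C: "C \<in> carrier_mat d d" "transpose_mat C = C"
  shows "transpose_mat (kron A C) = kron A C"
proof (rule eq_matI)
  fix i j assume "i < dim_row (kron A C)" "j < dim_col (kron A C)"
  hence i: "i < k * d" and j: "j < k * d" using A C unfolding kron_def by auto
  have d: "0 < d" using i by (cases d) auto
  have "i div d < k" "j div d < k" using i j by (auto simp: less_mult_imp_div_less)
  moreover have "i mod d < d" "j mod d < d" using d by auto
  ultimately have "A $$ (j div d, i div d) = A $$ (i div d, j div d)"
    "C $$ (j mod d, i mod d) = C $$ (i mod d, j mod d)"
    using A C by (metis carrier_matD index_transpose_mat(1))+
  thus "transpose_mat (kron A C) $$ (i, j) = kron A C $$ (i, j)"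
    using i j A(1) C(1) unfolding kron_def by simp
qed (use A C in \<open>auto simp: kron_def\<close>)

lemma kron_quadratic_form_blocks:
  fixes A C :: "real mat"
  assumes A: "A \<in> carrier_mat k k" and C: "C \<in> carrier_mat d d" and x: "x \<in> carrier_vec (k * d)"
  defines "r \<equiv> \<lambda>i. vec d (\<lambda>j. x $ (i * d + j))"
  shows "x \<bullet> (kron A C *\<^sub>v x) = (\<Sum>i = 0..<k. \<Sum>i' = 0..<k. A $$ (i, i') * (r i \<bullet> (C *\<^sub>v r i')))"
proof -
  have K: "kron A C \<in> carrier_mat (k * d) (k * d)" by (rule kron_carrier[OF A C])
  have rCr: "r i \<bullet> (C *\<^sub>v r i') = (\<Sum>j = 0..<d. \<Sum>j' = 0..<d. x $ (i * d + j) * (C $$ (j, j') * x $ (i' * d + j')))"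
    for i i'
    unfolding scalar_prod_def sum_distrib_left using C
    by (intro sum.cong refl) (auto simp: r_def scalar_prod_def sum_distrib_left)
  have "x \<bullet> (kron A C *\<^sub>v x) = (\<Sum>s = 0..<k * d. x $ s * (\<Sum>t = 0..<k * d. kron A C $$ (s, t) * x $ t))"
    unfolding scalar_prod_def using K x by (intro sum.cong refl) (auto simp: scalar_prod_def)
  also have "\<dots> = (\<Sum>i = 0..<k. \<Sum>j = 0..<d. x $ (i * d + j) *
      (\<Sum>i' = 0..<k. \<Sum>j' = 0..<d. A $$ (i, i') * C $$ (j, j') * x $ (i' * d + j')))"
    unfolding sum_upt_mult_split using A C by (intro sum.cong refl) (simp add: index_kron_blocks)
  also have "\<dots> = (\<Sum>i = 0..<k. \<Sum>i' = 0..<k. \<Sum>j = 0..<d. \<Sum>j' = 0..<d.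
      x $ (i * d + j) * (A $$ (i, i') * C $$ (j, j') * x $ (i' * d + j')))"
    by (rule sum.cong[OF refl]) (simp only: sum_distrib_left, rule sum.swap)
  also have "\<dots> = (\<Sum>i = 0..<k. \<Sum>i' = 0..<k. A $$ (i, i') * (r i \<bullet> (C *\<^sub>v r i')))"
    unfolding rCr sum_distrib_left by (intro sum.cong refl) (simp add: mult_ac)
  finally show ?thesis .
qed

lemma kron_quadratic_form_diag:
  fixes A C :: "real mat"
  assumes A: "A \<in> carrier_mat k k" and CV: "orth_diagonalization d C V E" and x: "x \<in> carrier_vec (k * d)"
  defines "r \<equiv> \<lambda>i. vec d (\<lambda>j. x $ (i * d + j))"
  defines "Y \<equiv> \<lambda>q. vec k (\<lambda>i. (transpose_mat V *\<^sub>v r i) $ q)"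
    \<comment> \<open>\<open>r i\<close> is the \<open>i\<close>-th block of length \<open>d\<close> of \<open>x\<close>; \<open>Y q\<close> collects the \<open>q\<close>-th
      coordinates of all blocks in the eigenbasis of \<open>C\<close>\<close>
  shows "x \<bullet> (kron A C *\<^sub>v x) = (\<Sum>q = 0..<d. E $$ (q, q) * (Y q \<bullet> (A *\<^sub>v Y q)))"
    and "x \<bullet> x = (\<Sum>q = 0..<d. Y q \<bullet> Y q)"
proof -
  have V: "orthogonal_matrix d V" and C: "C \<in> carrier_mat d d"
    using CV by (auto simp: orth_diagonalization_def orthogonal_matrix_def)
  have r: "r i \<in> carrier_vec d" for i by (simp add: r_def)
  have YAY: "Y q \<bullet> (A *\<^sub>v Y q) = (\<Sum>i = 0..<k. \<Sum>i' = 0..<k. Y q $ i * (A $$ (i, i') * Y q $ i'))" for q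
    unfolding scalar_prod_def sum_distrib_left using A
    by (intro sum.cong refl) (auto simp: Y_def scalar_prod_def sum_distrib_left)
  have "x \<bullet> (kron A C *\<^sub>v x) = (\<Sum>i = 0..<k. \<Sum>i' = 0..<k. A $$ (i, i') * (r i \<bullet> (C *\<^sub>v r i')))"
    unfolding r_def by (rule kron_quadratic_form_blocks[OF A C x])
  also have "\<dots> = (\<Sum>i = 0..<k. \<Sum>i' = 0..<k. \<Sum>q = 0..<d. E $$ (q, q) * (Y q $ i * (A $$ (i, i') * Y q $ i')))"
    unfolding orth_diagonalization_bilinear[OF CV r r] sum_distrib_left
    by (intro sum.cong refl) (simp add: Y_def mult_ac)
  also have "\<dots> = (\<Sum>q = 0..<d. E $$ (q, q) * (Y q \<bullet> (A *\<^sub>v Y q)))"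
    unfolding YAY sum_distrib_left by (subst sum.swap, rule sum.cong[OF refl], rule sum.swap)
  finally show "x \<bullet> (kron A C *\<^sub>v x) = (\<Sum>q = 0..<d. E $$ (q, q) * (Y q \<bullet> (A *\<^sub>v Y q)))" .
  have "x \<bullet> x = (\<Sum>i = 0..<k. \<Sum>j = 0..<d. (x $ (i * d + j))\<^sup>2)"
    using scalar_prod_self_sum[of x] x by (simp add: sum_upt_mult_split)
  also have "\<dots> = (\<Sum>i = 0..<k. r i \<bullet> r i)" by (simp add: r_def scalar_prod_self_sum)
  also have "\<dots> = (\<Sum>i = 0..<k. (transpose_mat V *\<^sub>v r i) \<bullet> (transpose_mat V *\<^sub>v r i))"
    using orthogonal_matrix_transpose_norm[OF V r] by simp
  also have "\<dots> = (\<Sum>i = 0..<k. \<Sum>q = 0..<d. ((transpose_mat V *\<^sub>v r i) $ q)\<^sup>2)"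
    using V[unfolded orthogonal_matrix_def, THEN conjunct1] by (simp add: scalar_prod_self_sum)
  also have "\<dots> = (\<Sum>q = 0..<d. Y q \<bullet> Y q)"
    by (subst sum.swap) (simp add: scalar_prod_self_sum Y_def)
  finally show "x \<bullet> x = (\<Sum>q = 0..<d. Y q \<bullet> Y q)" .
qed

lemma kron_quadratic_bounds:
  fixes A C :: "real mat"
  assumes A: "A \<in> carrier_mat k k" and C: "C \<in> carrier_mat d d" "transpose_mat C = C"
    and A_bounds: "\<And>y. y \<in> carrier_vec k \<Longrightarrow> a1 * (y \<bullet> y) \<le> y \<bullet> (A *\<^sub>v y) \<and> y \<bullet> (A *\<^sub>v y) \<le> a2 * (y \<bullet> y)"
    and C_bounds: "\<And>z. z \<in> carrier_vec d \<Longrightarrow> c1 * (z \<bullet> z) \<le> z \<bullet> (C *\<^sub>v z) \<and> z \<bullet> (C *\<^sub>v z) \<le> c2 * (z \<bullet> z)"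
    and a1: "0 \<le> a1" and c1: "0 \<le> c1" and x: "x \<in> carrier_vec (k * d)"
  shows "a1 * c1 * (x \<bullet> x) \<le> x \<bullet> (kron A C *\<^sub>v x) \<and> x \<bullet> (kron A C *\<^sub>v x) \<le> a2 * c2 * (x \<bullet> x)"
proof -
  obtain V E where CV: "orth_diagonalization d C V E" using symmetric_orth_diagonalization[OF C] .
  define Y where "Y = (\<lambda>q. vec k (\<lambda>i. (transpose_mat V *\<^sub>v vec d (\<lambda>j. x $ (i * d + j))) $ q))"
  note forms = kron_quadratic_form_diag[OF A CV x]
  have E: "c1 \<le> E $$ (q, q)" "E $$ (q, q) \<le> c2" if "q < d" for q
    using orth_diagonalization_eigenvalue_diag[OF CV that] C_bounds C(1)
    by (auto intro: eigenvalue_ge_quadratic_lower_bound eigenvalue_le_quadratic_upper_bound)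
  have term_bounds: "a1 * c1 * (Y q \<bullet> Y q) \<le> E $$ (q, q) * (Y q \<bullet> (A *\<^sub>v Y q))
      \<and> E $$ (q, q) * (Y q \<bullet> (A *\<^sub>v Y q)) \<le> a2 * c2 * (Y q \<bullet> Y q)" if q: "q < d" for q
  proof -
    have Y: "a1 * (Y q \<bullet> Y q) \<le> Y q \<bullet> (A *\<^sub>v Y q)" "Y q \<bullet> (A *\<^sub>v Y q) \<le> a2 * (Y q \<bullet> Y q)"
      using A_bounds[of "Y q"] by (auto simp: Y_def)
    have "0 \<le> a1 * (Y q \<bullet> Y q)" using a1 scalar_prod_self_nonneg by simp
    hence pos: "0 \<le> Y q \<bullet> (A *\<^sub>v Y q)" using Y(1) by linarith
    have "a1 * c1 * (Y q \<bullet> Y q) \<le> c1 * (Y q \<bullet> (A *\<^sub>v Y q))"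
      using mult_left_mono[OF Y(1) c1] by (simp add: mult_ac)
    also have "\<dots> \<le> E $$ (q, q) * (Y q \<bullet> (A *\<^sub>v Y q))" by (rule mult_right_mono[OF E(1)[OF q] pos])
    finally have lower: "a1 * c1 * (Y q \<bullet> Y q) \<le> E $$ (q, q) * (Y q \<bullet> (A *\<^sub>v Y q))" .
    have "E $$ (q, q) * (Y q \<bullet> (A *\<^sub>v Y q)) \<le> c2 * (Y q \<bullet> (A *\<^sub>v Y q))"
      by (rule mult_right_mono[OF E(2)[OF q] pos])
    also have "\<dots> \<le> c2 * (a2 * (Y q \<bullet> Y q))"
      by (rule mult_left_mono[OF Y(2)]) (use c1 E[OF q] in linarith)
    finally show ?thesis using lower by (simp add: mult_ac)
  qed
  show ?thesis unfolding forms sum_distrib_left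
    by (intro conjI sum_mono) (use term_bounds in \<open>auto simp: Y_def\<close>)
qed

section \<open>Condition number of a sum of Kronecker products\<close>

lemma weighted_average_le_Max:
  fixes w c :: "'i \<Rightarrow> real"
  assumes "finite I" "I \<noteq> {}" "\<And>i. i \<in> I \<Longrightarrow> 0 < w i"
  shows "(\<Sum>i \<in> I. w i / sum w I * c i) \<le> Max (c ` I)"
proof -
  have S: "0 < sum w I" using assms by (intro sum_pos) auto
  have "(\<Sum>i \<in> I. w i / sum w I * c i) \<le> (\<Sum>i \<in> I. w i / sum w I * Max (c ` I))"
  proof (rule sum_mono)
    fix i assume "i \<in> I"
    thus "w i / sum w I * c i \<le> w i / sum w I * Max (c ` I)"
      using assms S by (intro mult_left_mono Max_ge) (auto simp: less_imp_le)
  qed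
  also have "\<dots> = Max (c ` I)"
    using S by (simp add: sum_distrib_right[symmetric] sum_divide_distrib[symmetric])
  finally show ?thesis .
qed

lemma sum_products_ratio_le:
  fixes m m' M M' r r' :: "'i \<Rightarrow> real"
  assumes I: "finite I" "I \<noteq> {}"
    and pos: "\<And>i. i \<in> I \<Longrightarrow> 0 < m i \<and> 0 < m' i \<and> 0 \<le> M i \<and> 0 \<le> M' i"
    and r: "\<And>i. i \<in> I \<Longrightarrow> M i / m i \<le> r i" and r': "\<And>i. i \<in> I \<Longrightarrow> M' i / m' i \<le> r' i"
  shows "(\<Sum>i \<in> I. M i * M' i) / (\<Sum>i \<in> I. m i * m' i)
    \<le> (\<Sum>i \<in> I. m i * m' i / (\<Sum>j \<in> I. m j * m' j) * r i * r' i)"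
  unfolding sum_divide_distrib
proof (rule sum_mono)
  fix i assume i: "i \<in> I"
  define S where "S = (\<Sum>j \<in> I. m j * m' j)"
  have "0 < S" unfolding S_def using I pos by (intro sum_pos) (auto intro: mult_pos_pos)
  have m: "0 < m i" "0 < m' i" and M: "0 \<le> M i" "0 \<le> M' i" using pos[OF i] by auto
  have "M i * M' i / S = m i * m' i / S * (M i / m i * (M' i / m' i))"
    using m by (simp add: field_simps)
  also have "\<dots> \<le> m i * m' i / S * (r i * r' i)"
    using m M r[OF i] r'[OF i] \<open>0 < S\<close> by (intro mult_left_mono mult_mono') auto
  finally show "M i * M' i / S \<le> m i * m' i / S * r i * r' i" by (simp add: mult.assoc)
qed

lemma foldr_add_symmetric_mat:
  fixes T :: "'i \<Rightarrow> real mat"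
  assumes T: "\<And>l. l \<in> set ls \<Longrightarrow> T l \<in> carrier_mat n n \<and> transpose_mat (T l) = T l"
  shows "foldr (+) (map T ls) (0\<^sub>m n n) \<in> carrier_mat n n \<and>
         transpose_mat (foldr (+) (map T ls) (0\<^sub>m n n)) = foldr (+) (map T ls) (0\<^sub>m n n) \<and>
         (\<forall>x \<in> carrier_vec n. x \<bullet> (foldr (+) (map T ls) (0\<^sub>m n n) *\<^sub>v x) = (\<Sum>l \<leftarrow> ls. x \<bullet> (T l *\<^sub>v x)))"
  using T
proof (induct ls)
  case Nil
  have "x \<bullet> (0\<^sub>m n n *\<^sub>v x) = 0" if x: "x \<in> carrier_vec n" for x :: "real vec"
  proof -
    have "0\<^sub>m n n *\<^sub>v x = 0\<^sub>v n" using x by (intro eq_vecI, auto simp: scalar_prod_def)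
    thus ?thesis using x by simp
  qed
  thus ?case by (auto intro!: eq_matI)
next
  case (Cons l ls)
  define R where "R = foldr (+) (map T ls) (0\<^sub>m n n)"
  have IH: "R \<in> carrier_mat n n" "transpose_mat R = R"
    "\<And>x. x \<in> carrier_vec n \<Longrightarrow> x \<bullet> (R *\<^sub>v x) = (\<Sum>l \<leftarrow> ls. x \<bullet> (T l *\<^sub>v x))"
    using Cons unfolding R_def by auto
  have Tl: "T l \<in> carrier_mat n n" "transpose_mat (T l) = T l" using Cons by auto
  have e: "foldr (+) (map T (l # ls)) (0\<^sub>m n n) = T l + R" unfolding R_def by simp
  show ?case unfolding e
  proof (intro conjI ballI)
    show "T l + R \<in> carrier_mat n n" using Tl IH by auto
    show "transpose_mat (T l + R) = T l + R" using Tl IH by (simp add: transpose_add)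
    fix x :: "real vec" assume x: "x \<in> carrier_vec n"
    have "(T l + R) *\<^sub>v x = T l *\<^sub>v x + R *\<^sub>v x" using Tl IH x by (simp add: add_mult_distrib_mat_vec)
    hence "x \<bullet> ((T l + R) *\<^sub>v x) = x \<bullet> (T l *\<^sub>v x) + x \<bullet> (R *\<^sub>v x)"
      using Tl IH x by (simp add: scalar_prod_add_distrib[of _ n])
    thus "x \<bullet> ((T l + R) *\<^sub>v x) = (\<Sum>l \<leftarrow> l # ls. x \<bullet> (T l *\<^sub>v x))" using IH(3)[OF x] by simp
  qed
qed

text \<open>\<open>sigma_min\<close> is taken from the smaller Gram matrix, which is \<open>P P\<^sup>T\<close> for a wide \<open>P\<close>.\<close>

lemma sigma_min_sq_eq_lambda_min:
  fixes P :: "real mat"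
  assumes P: "P \<in> carrier_mat p q" and shape: "p < q \<or> P = 1\<^sub>m p" and p: "0 < p"
  shows "(sigma_min P)\<^sup>2 = lambda_min (P * transpose_mat P)"
proof -
  have "0 \<le> lambda_min (P * transpose_mat P)"
    by (rule positive_semidefinite_lambda_nonneg(1)[OF gram_positive_semidefinite[OF P] p])
  moreover have "sigma_min P = sqrt (lambda_min (P * transpose_mat P))"
    using shape P by (auto simp: sigma_min_def)
  ultimately show ?thesis by simp
qed

lemma lambda_max_le_sigma_max_sq:
  fixes P :: "real mat"
  assumes P: "P \<in> carrier_mat p q" and "0 < p" "0 < q"
  shows "lambda_max (P * transpose_mat P) \<le> (sigma_max P)\<^sup>2"
proof -
  have "0 \<le> lambda_max (transpose_mat P * P)"
    using positive_semidefinite_lambda_nonneg(2)[OF gram_positive_semidefinite[of "transpose_mat P" q p]]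
      assms by simp
  thus ?thesis using lambda_max_gram_le[OF assms] by (simp add: sigma_max_def)
qed

lemma wide_factor_gram_eigenvalues:
  fixes P :: "real mat"
  assumes P: "P \<in> carrier_mat p q" and shape: "p < q \<or> P = 1\<^sub>m p" and p: "0 < p"
    and \<sigma>: "sigma_min P \<noteq> 0"
  shows "lambda_min (P * transpose_mat P) = (sigma_min P)\<^sup>2" and "0 < lambda_min (P * transpose_mat P)"
    and "0 \<le> lambda_max (P * transpose_mat P)"
    and "lambda_max (P * transpose_mat P) / lambda_min (P * transpose_mat P) \<le> (kappa_rect P)\<^sup>2"
proof -
  have q: "0 < q" using shape p P by auto
  show min: "lambda_min (P * transpose_mat P) = (sigma_min P)\<^sup>2"
    using sigma_min_sq_eq_lambda_min[OF P shape p] ..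
  thus pos: "0 < lambda_min (P * transpose_mat P)" using \<sigma> by simp
  show "0 \<le> lambda_max (P * transpose_mat P)"
    using positive_semidefinite_lambda_nonneg(2)[OF gram_positive_semidefinite[OF P] p] .
  from lambda_max_le_sigma_max_sq[OF P p q] pos
  show "lambda_max (P * transpose_mat P) / lambda_min (P * transpose_mat P) \<le> (kappa_rect P)\<^sup>2"
    unfolding kappa_rect_def power_divide min by (auto intro: divide_right_mono)
qed

lemma psd_sqrt_sandwich_gram:
  fixes Q \<Sigma> :: "real mat"
  assumes \<Sigma>: "positive_definite d \<Sigma>" and d: "0 < d" and Q: "Q \<in> carrier_mat d q"
  defines "C \<equiv> psd_sqrt d \<Sigma> * Q * transpose_mat Q * psd_sqrt d \<Sigma>"
  shows "positive_semidefinite d C"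
    and "z \<in> carrier_vec d \<Longrightarrow> lambda_min (Q * transpose_mat Q) * lambda_min \<Sigma> * (z \<bullet> z) \<le> z \<bullet> (C *\<^sub>v z)"
    and "z \<in> carrier_vec d \<Longrightarrow> z \<bullet> (C *\<^sub>v z) \<le> lambda_max (Q * transpose_mat Q) * lambda_max \<Sigma> * (z \<bullet> z)"
proof -
  define S where "S = psd_sqrt d \<Sigma>"
  define B where "B = Q * transpose_mat Q"
  have \<Sigma>c: "\<Sigma> \<in> carrier_mat d d" "transpose_mat \<Sigma> = \<Sigma>" using \<Sigma> by (auto simp: positive_definite_def)
  have S: "positive_semidefinite d S" and SS: "S * S = \<Sigma>"
    using psd_sqrt[OF positive_definite_imp_semidefinite[OF \<Sigma>]] by (auto simp: S_def)
  have Sc: "S \<in> carrier_mat d d" and Ss: "transpose_mat S = S" using S by (auto simp: positive_semidefinite_def)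
  have B: "positive_semidefinite d B" unfolding B_def by (rule gram_positive_semidefinite[OF Q])
  have Bc: "B \<in> carrier_mat d d" "transpose_mat B = B" using B by (auto simp: positive_semidefinite_def)
  have SQ: "S * Q \<in> carrier_mat d q" using Sc Q by auto
  have SQT: "transpose_mat (S * Q) = transpose_mat Q * S" using transpose_mult[OF Sc Q] Ss by simp
  have C_gram: "C = (S * Q) * transpose_mat (S * Q)"
    unfolding C_def S_def[symmetric] SQT by (rule assoc_mult_mat[of _ d q _ d _ d]) (use Sc Q in auto)
  show "positive_semidefinite d C" unfolding C_gram by (rule gram_positive_semidefinite[OF SQ])
  have B0: "0 \<le> lambda_min B" "0 \<le> lambda_max B" using positive_semidefinite_lambda_nonneg[OF B d] .
  assume z: "z \<in> carrier_vec d"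
  have Sz: "S *\<^sub>v z \<in> carrier_vec d" using Sc z by auto
  have "transpose_mat (S * Q) *\<^sub>v z = transpose_mat Q *\<^sub>v (S *\<^sub>v z)" unfolding SQT using Sc Q z by auto
  hence C_form: "z \<bullet> (C *\<^sub>v z) = (S *\<^sub>v z) \<bullet> (B *\<^sub>v (S *\<^sub>v z))"
    unfolding C_gram gram_quadratic_form[OF SQ z] B_def gram_quadratic_form[OF Q Sz] by simp
  have SzSz: "(S *\<^sub>v z) \<bullet> (S *\<^sub>v z) = z \<bullet> (\<Sigma> *\<^sub>v z)"
    using scalar_prod_symmetric_mat[OF Sc Ss z Sz] Sc z by (auto simp: SS[symmetric])
  note \<Sigma>z = rayleigh_quotient_bounds[OF \<Sigma>c z] and Bz = rayleigh_quotient_bounds[OF Bc Sz]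
  have "lambda_min B * lambda_min \<Sigma> * (z \<bullet> z) \<le> lambda_min B * ((S *\<^sub>v z) \<bullet> (S *\<^sub>v z))"
    unfolding SzSz mult.assoc by (rule mult_left_mono[OF \<Sigma>z(1) B0(1)])
  with Bz(1) show "lambda_min (Q * transpose_mat Q) * lambda_min \<Sigma> * (z \<bullet> z) \<le> z \<bullet> (C *\<^sub>v z)"
    unfolding C_form B_def by linarith
  have "lambda_max B * ((S *\<^sub>v z) \<bullet> (S *\<^sub>v z)) \<le> lambda_max B * lambda_max \<Sigma> * (z \<bullet> z)"
    unfolding SzSz mult.assoc by (rule mult_left_mono[OF \<Sigma>z(2) B0(2)])
  with Bz(2) show "z \<bullet> (C *\<^sub>v z) \<le> lambda_max (Q * transpose_mat Q) * lambda_max \<Sigma> * (z \<bullet> z)"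
    unfolding C_form B_def by linarith
qed

lemma kron_gram_quadratic_bounds:
  fixes P Q \<Sigma> :: "real mat"
  assumes \<Sigma>: "positive_definite d \<Sigma>" and d: "0 < d" and k: "0 < k"
    and P: "P \<in> carrier_mat k p" and Q: "Q \<in> carrier_mat d q"
  defines "T \<equiv> kron (P * transpose_mat P) (psd_sqrt d \<Sigma> * Q * transpose_mat Q * psd_sqrt d \<Sigma>)"
  shows "T \<in> carrier_mat (k * d) (k * d)" and "transpose_mat T = T"
    and "x \<in> carrier_vec (k * d) \<Longrightarrow>
      lambda_min \<Sigma> * (lambda_min (P * transpose_mat P) * lambda_min (Q * transpose_mat Q)) * (x \<bullet> x)
      \<le> x \<bullet> (T *\<^sub>v x)"
    and "x \<in> carrier_vec (k * d) \<Longrightarrow> x \<bullet> (T *\<^sub>v x)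
      \<le> lambda_max \<Sigma> * (lambda_max (P * transpose_mat P) * lambda_max (Q * transpose_mat Q)) * (x \<bullet> x)"
proof -
  define A where "A = P * transpose_mat P"
  define C where "C = psd_sqrt d \<Sigma> * Q * transpose_mat Q * psd_sqrt d \<Sigma>"
  note C = psd_sqrt_sandwich_gram[OF \<Sigma> d Q, folded C_def]
  have A: "positive_semidefinite k A" unfolding A_def by (rule gram_positive_semidefinite[OF P])
  have Ac: "A \<in> carrier_mat k k" "transpose_mat A = A" using A by (auto simp: positive_semidefinite_def)
  have Cc: "C \<in> carrier_mat d d" "transpose_mat C = C" using C(1) by (auto simp: positive_semidefinite_def)
  show "T \<in> carrier_mat (k * d) (k * d)" "transpose_mat T = T"
    unfolding T_def A_def[symmetric] C_def[symmetric] using kron_carrier[OF Ac(1) Cc(1)] kron_symmetric[OF Ac Cc]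
    by auto
  assume x: "x \<in> carrier_vec (k * d)"
  have "lambda_min A * (lambda_min (Q * transpose_mat Q) * lambda_min \<Sigma>) * (x \<bullet> x) \<le> x \<bullet> (T *\<^sub>v x)
    \<and> x \<bullet> (T *\<^sub>v x) \<le> lambda_max A * (lambda_max (Q * transpose_mat Q) * lambda_max \<Sigma>) * (x \<bullet> x)"
    unfolding T_def A_def[symmetric] C_def[symmetric]
    by (rule kron_quadratic_bounds[OF Ac(1) Cc _ _ _ _ x])
      (use rayleigh_quotient_bounds[OF Ac] C(2,3) positive_semidefinite_lambda_nonneg[OF A k]
        positive_semidefinite_lambda_nonneg[OF gram_positive_semidefinite[OF Q] d]
        positive_definite_lambda_min_pos[OF \<Sigma> d] in auto)
  thus "lambda_min \<Sigma> * (lambda_min (P * transpose_mat P) * lambda_min (Q * transpose_mat Q)) * (x \<bullet> x)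
      \<le> x \<bullet> (T *\<^sub>v x)"
    and "x \<bullet> (T *\<^sub>v x)
      \<le> lambda_max \<Sigma> * (lambda_max (P * transpose_mat P) * lambda_max (Q * transpose_mat Q)) * (x \<bullet> x)"
    unfolding A_def by (simp_all add: mult_ac)
qed

lemma kappa_spd_le_of_quadratic_bounds:
  fixes G :: "real mat"
  assumes G: "G \<in> carrier_mat n n" "transpose_mat G = G" and n: "0 < n" and lo: "0 < lo"
    and bounds: "\<And>x. x \<in> carrier_vec n \<Longrightarrow> lo * (x \<bullet> x) \<le> x \<bullet> (G *\<^sub>v x) \<and> x \<bullet> (G *\<^sub>v x) \<le> up * (x \<bullet> x)"
  shows "positive_definite n G" and "kappa_spd G \<le> up / lo"
proof -
  have "0 < x \<bullet> (G *\<^sub>v x)" if "x \<in> carrier_vec n" "x \<noteq> 0\<^sub>v n" for x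
    using bounds[OF that(1)] mult_pos_pos[OF lo scalar_prod_self_pos[OF that]] by linarith
  thus "positive_definite n G" using G by (simp add: positive_definite_def)
  have min: "lo \<le> lambda_min G"
    using eigenvalue_ge_quadratic_lower_bound[OF G(1) eigenvalue_lambda_min[OF G n]] bounds by blast
  have max: "lambda_max G \<le> up"
    using eigenvalue_le_quadratic_upper_bound[OF G(1) eigenvalue_lambda_max[OF G n]] bounds by blast
  have "0 \<le> up" using max min lo lambda_min_le_lambda_max[OF G n] by linarith
  have "lambda_max G / lambda_min G \<le> up / lambda_min G"
    using max min lo by (intro divide_right_mono) auto
  also have "\<dots> \<le> up / lo" using \<open>0 \<le> up\<close> min lo by (intro divide_left_mono) auto
  finally show "kappa_spd G \<le> up / lo" unfolding kappa_spd_def .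
qed

lemma kron_gram_sum_kappa_le:
  fixes P Q :: "'i \<Rightarrow> real mat" and \<Sigma> :: "real mat"
  assumes \<Sigma>: "positive_definite d \<Sigma>" and d: "0 < d" and k: "0 < k"
    and ls: "distinct ls" "ls \<noteq> []"
    and PQ: "\<And>l. l \<in> set ls \<Longrightarrow> P l \<in> carrier_mat k (p l) \<and> Q l \<in> carrier_mat d (q l)"
    and pos: "\<And>l. l \<in> set ls \<Longrightarrow> 0 < lambda_min (P l * transpose_mat (P l)) * lambda_min (Q l * transpose_mat (Q l))"
  defines "G \<equiv> foldr (+) (map (\<lambda>l. kron (P l * transpose_mat (P l))
                 (psd_sqrt d \<Sigma> * Q l * transpose_mat (Q l) * psd_sqrt d \<Sigma>)) ls) (0\<^sub>m (k * d) (k * d))"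
  shows "positive_definite (k * d) G"
    and "kappa_spd G \<le> kappa_spd \<Sigma> *
      (\<Sum>l \<in> set ls. lambda_max (P l * transpose_mat (P l)) * lambda_max (Q l * transpose_mat (Q l))) /
      (\<Sum>l \<in> set ls. lambda_min (P l * transpose_mat (P l)) * lambda_min (Q l * transpose_mat (Q l)))"
proof -
  define T where "T = (\<lambda>l. kron (P l * transpose_mat (P l)) (psd_sqrt d \<Sigma> * Q l * transpose_mat (Q l) * psd_sqrt d \<Sigma>))"
  define lo where "lo = (\<lambda>l. lambda_min (P l * transpose_mat (P l)) * lambda_min (Q l * transpose_mat (Q l)))"
  define hi where "hi = (\<lambda>l. lambda_max (P l * transpose_mat (P l)) * lambda_max (Q l * transpose_mat (Q l)))"
  note term_bounds = kron_gram_quadratic_bounds[OF \<Sigma> d k]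
  have G: "G \<in> carrier_mat (k * d) (k * d) \<and> transpose_mat G = G \<and>
     (\<forall>x \<in> carrier_vec (k * d). x \<bullet> (G *\<^sub>v x) = (\<Sum>l \<leftarrow> ls. x \<bullet> (T l *\<^sub>v x)))"
  proof (unfold G_def T_def[symmetric], rule foldr_add_symmetric_mat)
    fix l assume "l \<in> set ls"
    with PQ have "P l \<in> carrier_mat k (p l)" "Q l \<in> carrier_mat d (q l)" by auto
    from term_bounds(1,2)[OF this]
    show "T l \<in> carrier_mat (k * d) (k * d) \<and> transpose_mat (T l) = T l" unfolding T_def by blast
  qed
  have sum_set: "(\<Sum>l \<leftarrow> ls. f l) = (\<Sum>l \<in> set ls. f l)" for f :: "'i \<Rightarrow> real"
    using sum_list_distinct_conv_sum_set[OF ls(1)] .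
  have "0 < sum lo (set ls)" using pos ls(2) by (intro sum_pos) (auto simp: lo_def)
  hence lower_pos: "0 < lambda_min \<Sigma> * sum lo (set ls)"
    using positive_definite_lambda_min_pos[OF \<Sigma> d] by simp
  have TB: "lambda_min \<Sigma> * lo l * (x \<bullet> x) \<le> x \<bullet> (T l *\<^sub>v x)
    \<and> x \<bullet> (T l *\<^sub>v x) \<le> lambda_max \<Sigma> * hi l * (x \<bullet> x)"
    if "l \<in> set ls" "x \<in> carrier_vec (k * d)" for l x
  proof -
    from PQ[OF that(1)] have "P l \<in> carrier_mat k (p l)" "Q l \<in> carrier_mat d (q l)" by auto
    from term_bounds(3,4)[OF this that(2)] show ?thesis unfolding T_def lo_def hi_def by blast
  qed
  have "lambda_min \<Sigma> * sum lo (set ls) * (x \<bullet> x) \<le> x \<bullet> (G *\<^sub>v x)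
    \<and> x \<bullet> (G *\<^sub>v x) \<le> lambda_max \<Sigma> * sum hi (set ls) * (x \<bullet> x)" if x: "x \<in> carrier_vec (k * d)" for x
    using G x TB
    by (auto simp: sum_set sum_distrib_left sum_distrib_right intro!: sum_mono)
  from kappa_spd_le_of_quadratic_bounds[OF _ _ _ lower_pos this] G d k
  have "positive_definite (k * d) G"
    and "kappa_spd G \<le> lambda_max \<Sigma> * sum hi (set ls) / (lambda_min \<Sigma> * sum lo (set ls))" by auto
  thus "positive_definite (k * d) G"
    and "kappa_spd G \<le> kappa_spd \<Sigma> * sum hi (set ls) / sum lo (set ls)"
    by (auto simp: kappa_spd_def)
qed

lemma kappa_spd_nonneg:
  assumes "positive_definite n M" "0 < n"
  shows "0 \<le> kappa_spd M"
proof -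
  have "M \<in> carrier_mat n n" "transpose_mat M = M" using assms(1) by (auto simp: positive_definite_def)
  hence "lambda_min M \<le> lambda_max M" using lambda_min_le_lambda_max assms(2) by blast
  thus ?thesis using positive_definite_lambda_min_pos[OF assms] by (simp add: kappa_spd_def)
qed

theorem kron_gram_sum_kappa_le_weighted:
  fixes P Q :: "'i \<Rightarrow> real mat" and \<Sigma> :: "real mat" and d k :: nat and ls :: "'i list"
  defines "\<alpha> \<equiv> \<lambda>l. (sigma_min (P l))\<^sup>2 * (sigma_min (Q l))\<^sup>2"
  defines "G \<equiv> foldr (+) (map (\<lambda>l. kron (P l * transpose_mat (P l))
                 (psd_sqrt d \<Sigma> * Q l * transpose_mat (Q l) * psd_sqrt d \<Sigma>)) ls) (0\<^sub>m (k * d) (k * d))"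
  assumes \<Sigma>: "positive_definite d \<Sigma>" and d: "0 < d" and k: "0 < k"
    and ls: "distinct ls" "ls \<noteq> []"
    and P: "\<And>l. l \<in> set ls \<Longrightarrow> P l \<in> carrier_mat k (p l) \<and> (k < p l \<or> P l = 1\<^sub>m k)"
    and Q: "\<And>l. l \<in> set ls \<Longrightarrow> Q l \<in> carrier_mat d (q l) \<and> (d < q l \<or> Q l = 1\<^sub>m d)"
    and \<alpha>_pos: "\<And>l. l \<in> set ls \<Longrightarrow> 0 < \<alpha> l"
  shows "positive_definite (k * d) G"
    and "kappa_spd G \<le> kappa_spd \<Sigma> *
      (\<Sum>l \<in> set ls. \<alpha> l / sum \<alpha> (set ls) * (kappa_rect (P l))\<^sup>2 * (kappa_rect (Q l))\<^sup>2)"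
proof -
  have \<sigma>: "sigma_min (P l) \<noteq> 0" "sigma_min (Q l) \<noteq> 0" if "l \<in> set ls" for l
    using \<alpha>_pos[OF that] by (auto simp: \<alpha>_def)
  have wideP: "lambda_min (P l * transpose_mat (P l)) = (sigma_min (P l))\<^sup>2"
      "0 < lambda_min (P l * transpose_mat (P l))" "0 \<le> lambda_max (P l * transpose_mat (P l))"
      "lambda_max (P l * transpose_mat (P l)) / lambda_min (P l * transpose_mat (P l)) \<le> (kappa_rect (P l))\<^sup>2"
    and wideQ: "lambda_min (Q l * transpose_mat (Q l)) = (sigma_min (Q l))\<^sup>2"
      "0 < lambda_min (Q l * transpose_mat (Q l))" "0 \<le> lambda_max (Q l * transpose_mat (Q l))"
      "lambda_max (Q l * transpose_mat (Q l)) / lambda_min (Q l * transpose_mat (Q l)) \<le> (kappa_rect (Q l))\<^sup>2"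
    if "l \<in> set ls" for l
    using wide_factor_gram_eigenvalues[OF conjunct1[OF P[OF that]] conjunct2[OF P[OF that]] k \<sigma>(1)[OF that]]
      wide_factor_gram_eigenvalues[OF conjunct1[OF Q[OF that]] conjunct2[OF Q[OF that]] d \<sigma>(2)[OF that]]
    by blast+
  define lo where "lo = (\<lambda>l. lambda_min (P l * transpose_mat (P l)) * lambda_min (Q l * transpose_mat (Q l)))"
  define hi where "hi = (\<lambda>l. lambda_max (P l * transpose_mat (P l)) * lambda_max (Q l * transpose_mat (Q l)))"
  have lo: "lo l = \<alpha> l" "0 < lo l" if "l \<in> set ls" for l
    using wideP(1,2)[OF that] wideQ(1,2)[OF that] by (simp_all add: lo_def \<alpha>_def)
  have sum_lo: "sum lo (set ls) = sum \<alpha> (set ls)" by (rule sum.cong) (simp_all add: lo(1))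
  from kron_gram_sum_kappa_le[OF \<Sigma> d k ls, of P p Q q, folded G_def lo_def hi_def] P Q lo(2)
  have "positive_definite (k * d) G" and G: "kappa_spd G \<le> kappa_spd \<Sigma> * (sum hi (set ls) / sum lo (set ls))"
    by (auto simp: lo_def)
  thus "positive_definite (k * d) G" by blast
  have "sum hi (set ls) / sum lo (set ls)
      \<le> (\<Sum>l \<in> set ls. lo l / sum lo (set ls) * (kappa_rect (P l))\<^sup>2 * (kappa_rect (Q l))\<^sup>2)"
    unfolding hi_def lo_def by (rule sum_products_ratio_le) (use ls wideP(2-4) wideQ(2-4) in auto)
  also have "\<dots> = (\<Sum>l \<in> set ls. \<alpha> l / sum \<alpha> (set ls) * (kappa_rect (P l))\<^sup>2 * (kappa_rect (Q l))\<^sup>2)"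
    by (rule sum.cong) (simp_all add: lo(1) sum_lo)
  finally show "kappa_spd G \<le> kappa_spd \<Sigma> *
      (\<Sum>l \<in> set ls. \<alpha> l / sum \<alpha> (set ls) * (kappa_rect (P l))\<^sup>2 * (kappa_rect (Q l))\<^sup>2)"
    using G mult_left_mono[OF _ kappa_spd_nonneg[OF \<Sigma> d]] by (meson order_trans)
qed

section \<open>Linear residual networks\<close>

lemma Wdown_Suc: "j \<le> Suc i \<Longrightarrow> Wdown a W \<beta> (Suc i) j = layer a W \<beta> (Suc i) * Wdown a W \<beta> i j"
  unfolding Wdown_def by (simp add: upt_Suc_append)

lemma Wdown_empty: "Wdown a W \<beta> i (Suc i) = 1\<^sub>m (a i)"
  unfolding Wdown_def by simp

lemma Wup_empty: "Wup a W \<beta> (Suc j) j = 1\<^sub>m (a j)"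
  unfolding Wup_def by simp

lemma Wup_Cons: "i \<le> j \<Longrightarrow> Wup a W \<beta> i j = transpose_mat (layer a W \<beta> i) * Wup a W \<beta> (Suc i) j"
  unfolding Wup_def by (subst upt_conv_Cons, simp, simp only: foldr_Cons comp_def)

context
  fixes a :: "nat \<Rightarrow> nat" and W :: "nat \<Rightarrow> real mat" and \<beta> :: real and N :: nat
  assumes lay: "\<And>l. 1 \<le> l \<Longrightarrow> l \<le> N \<Longrightarrow> layer a W \<beta> l \<in> carrier_mat (a l) (a (l - 1))"
begin

lemma Wdown_carrier: "1 \<le> j \<Longrightarrow> j \<le> Suc i \<Longrightarrow> i \<le> N \<Longrightarrow> Wdown a W \<beta> i j \<in> carrier_mat (a i) (a (j - 1))"
proof (induct i)
  case 0
  hence "j = 1" by auto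
  thus ?case using Wdown_empty[of a W \<beta> 0] by simp
next
  case (Suc i)
  show ?case
  proof (cases "j = Suc (Suc i)")
    case True thus ?thesis using Wdown_empty[of a W \<beta> "Suc i"] by simp
  next
    case False
    hence j: "j \<le> Suc i" using Suc by auto
    have "Wdown a W \<beta> i j \<in> carrier_mat (a i) (a (j - 1))" using Suc j by auto
    moreover have "layer a W \<beta> (Suc i) \<in> carrier_mat (a (Suc i)) (a i)" using lay[of "Suc i"] Suc by auto
    ultimately show ?thesis unfolding Wdown_Suc[OF j] by auto
  qed
qed

lemma Wdown_lowest: "1 \<le> j \<Longrightarrow> j \<le> i \<Longrightarrow> i \<le> N \<Longrightarrow> Wdown a W \<beta> i j = Wdown a W \<beta> i (Suc j) * layer a W \<beta> j"
proof (induct i arbitrary: j)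
  case 0 thus ?case by simp
next
  case (Suc i j)
  have Lj: "layer a W \<beta> j \<in> carrier_mat (a j) (a (j - 1))" using lay Suc by auto
  show ?case
  proof (cases "j = Suc i")
    case True
    have "Wdown a W \<beta> (Suc i) j = layer a W \<beta> j * 1\<^sub>m (a (j - 1))"
      unfolding True Wdown_Suc[of "Suc i" i, OF le_refl] using Wdown_empty[of a W \<beta> i] by simp
    also have "\<dots> = layer a W \<beta> j" using Lj by simp
    also have "\<dots> = 1\<^sub>m (a j) * layer a W \<beta> j" using Lj by simp
    also have "1\<^sub>m (a j) = Wdown a W \<beta> (Suc i) (Suc j)" unfolding True Wdown_empty ..
    finally show ?thesis .
  next
    case False
    hence j: "j \<le> i" using Suc by auto
    have Ls: "layer a W \<beta> (Suc i) \<in> carrier_mat (a (Suc i)) (a i)" using lay[of "Suc i"] Suc by auto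
    have Wd: "Wdown a W \<beta> i (Suc j) \<in> carrier_mat (a i) (a j)" using Wdown_carrier[of "Suc j" i] j Suc by auto
    have "Wdown a W \<beta> (Suc i) j = layer a W \<beta> (Suc i) * Wdown a W \<beta> i j" using Wdown_Suc[of j i] j by simp
    also have "\<dots> = layer a W \<beta> (Suc i) * (Wdown a W \<beta> i (Suc j) * layer a W \<beta> j)" using Suc j by simp
    also have "\<dots> = (layer a W \<beta> (Suc i) * Wdown a W \<beta> i (Suc j)) * layer a W \<beta> j"
      using Ls Wd Lj by simp
    also have "layer a W \<beta> (Suc i) * Wdown a W \<beta> i (Suc j) = Wdown a W \<beta> (Suc i) (Suc j)"
      using Wdown_Suc[of "Suc j" i] j by simp
    finally show ?thesis .
  qed
qed

lemma Wup_eq_transpose_Wdown: "1 \<le> j \<Longrightarrow> j \<le> Suc i \<Longrightarrow> i \<le> N \<Longrightarrow> Wup a W \<beta> j i = transpose_mat (Wdown a W \<beta> i j)"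
proof (induct "Suc i - j" arbitrary: j)
  case 0
  hence "j = Suc i" by auto
  thus ?case using Wup_empty[of a W \<beta> i] Wdown_empty[of a W \<beta> i] by simp
next
  case (Suc t j)
  hence j: "j \<le> i" by auto
  have IH: "Wup a W \<beta> (Suc j) i = transpose_mat (Wdown a W \<beta> i (Suc j))" using Suc j by auto
  have Lj: "layer a W \<beta> j \<in> carrier_mat (a j) (a (j - 1))" using lay Suc j by auto
  have Wd: "Wdown a W \<beta> i (Suc j) \<in> carrier_mat (a i) (a j)" using Wdown_carrier[of "Suc j" i] j Suc by auto
  have "Wup a W \<beta> j i = transpose_mat (layer a W \<beta> j) * transpose_mat (Wdown a W \<beta> i (Suc j))"
    unfolding Wup_Cons[OF j] IH ..
  also have "\<dots> = transpose_mat (Wdown a W \<beta> i (Suc j) * layer a W \<beta> j)"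
    by (rule transpose_mult[symmetric, OF Wd Lj])
  also have "Wdown a W \<beta> i (Suc j) * layer a W \<beta> j = Wdown a W \<beta> i j"
    using Wdown_lowest[of j i] Suc j by simp
  finally show ?case .
qed

end

lemma residual_network_factors:
  fixes W :: "nat \<Rightarrow> real mat" and \<beta> :: real
  assumes L: "1 \<le> L" and d: "0 < d" and k: "0 < k" and m: "max d k < m"
    and W: "\<forall>l \<in> {1..L}. W l \<in> carrier_mat (widths L d k m l) (widths L d k m (l - 1))"
    and l: "l \<in> {1..L}"
  defines "a \<equiv> widths L d k m"
  shows "Wdown a W \<beta> L (l + 1) \<in> carrier_mat k (a l)"
    and "Wup a W \<beta> (l + 1) L = transpose_mat (Wdown a W \<beta> L (l + 1))"
    and "k < a l \<or> Wdown a W \<beta> L (l + 1) = 1\<^sub>m k"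
    and "Wup a W \<beta> 1 (l - 1) \<in> carrier_mat d (a (l - 1))"
    and "Wdown a W \<beta> (l - 1) 1 = transpose_mat (Wup a W \<beta> 1 (l - 1))"
    and "d < a (l - 1) \<or> Wup a W \<beta> 1 (l - 1) = 1\<^sub>m d"
proof -
  have aL: "a L = k" and a0: "a 0 = d" and am: "\<And>i. 0 < i \<Longrightarrow> i < L \<Longrightarrow> a i = m"
    using L d k m by (auto simp: a_def widths_def)
  have lay: "\<And>l. 1 \<le> l \<Longrightarrow> l \<le> L \<Longrightarrow> layer a W \<beta> l \<in> carrier_mat (a l) (a (l - 1))"
    using W by (auto simp: layer_def rect_id_def a_def)
  note carrier = Wdown_carrier[where N = L, OF lay] and transp = Wup_eq_transpose_Wdown[where N = L, OF lay]
  show "Wdown a W \<beta> L (l + 1) \<in> carrier_mat k (a l)"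
    using carrier[of "l + 1" L] l aL by auto
  show "Wup a W \<beta> (l + 1) L = transpose_mat (Wdown a W \<beta> L (l + 1))"
    using transp[of "l + 1" L] l by auto
  show "k < a l \<or> Wdown a W \<beta> L (l + 1) = 1\<^sub>m k"
    using am[of l] l m aL Wdown_empty[of a W \<beta> L] by (cases "l = L") auto
  have QT: "Wup a W \<beta> 1 (l - 1) = transpose_mat (Wdown a W \<beta> (l - 1) 1)"
    using transp[of 1 "l - 1"] l by auto
  show "Wup a W \<beta> 1 (l - 1) \<in> carrier_mat d (a (l - 1))"
    unfolding QT using carrier[of 1 "l - 1"] l a0 by auto
  show "Wdown a W \<beta> (l - 1) 1 = transpose_mat (Wup a W \<beta> 1 (l - 1))"
    unfolding QT by simp
  show "d < a (l - 1) \<or> Wup a W \<beta> 1 (l - 1) = 1\<^sub>m d"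
    using am[of "l - 1"] l m a0 Wup_empty[of a W \<beta> 0] by (cases "l = 1") auto
qed

theorem mainTheorem3:
  fixes L d k m :: nat and W :: "nat \<Rightarrow> real mat" and \<beta> :: real and \<Sigma> :: "real mat"
  defines "a \<equiv> widths L d k m"
  defines "G \<equiv> foldr (+) (map (\<lambda>l. kron (Wdown a W \<beta> L (l + 1) * Wup a W \<beta> (l + 1) L)
                 (psd_sqrt d \<Sigma> * Wup a W \<beta> 1 (l - 1) * Wdown a W \<beta> (l - 1) 1 * psd_sqrt d \<Sigma>))
              [1..<Suc L]) (0\<^sub>m (k * d) (k * d))"
  defines "\<alpha> \<equiv> \<lambda>l. (sigma_min (Wdown a W \<beta> L (l + 1)))\<^sup>2 * (sigma_min (Wup a W \<beta> 1 (l - 1)))\<^sup>2"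
  defines "\<gamma> \<equiv> \<lambda>l. \<alpha> l / (\<Sum>i = 1..L. \<alpha> i)"
  assumes "L \<ge> 1" and "d > 0" and "k > 0" and "m > max d k"
  assumes "\<forall>l \<in> {1..L}. W l \<in> carrier_mat (a l) (a (l - 1))"
  assumes "positive_definite d \<Sigma>"
  assumes "\<forall>l \<in> {1..L}. \<alpha> l > 0"
  shows "positive_definite (k * d) G \<and>
    kappa_spd G \<le> kappa_spd \<Sigma> * (\<Sum>l = 1..L. \<gamma> l * (kappa_rect (Wdown a W \<beta> L (l + 1)))\<^sup>2
                                              * (kappa_rect (Wup a W \<beta> 1 (l - 1)))\<^sup>2) \<and>
    kappa_spd \<Sigma> * (\<Sum>l = 1..L. \<gamma> l * (kappa_rect (Wdown a W \<beta> L (l + 1)))\<^sup>2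
                                              * (kappa_rect (Wup a W \<beta> 1 (l - 1)))\<^sup>2)
      \<le> kappa_spd \<Sigma> * Max ((\<lambda>l. (kappa_rect (Wdown a W \<beta> L (l + 1)))\<^sup>2
                                    * (kappa_rect (Wup a W \<beta> 1 (l - 1)))\<^sup>2) ` {1..L})"
proof -
  note a_def = \<open>a \<equiv> widths L d k m\<close> and \<Sigma> = \<open>positive_definite d \<Sigma>\<close>
    and \<alpha>_pos = \<open>\<forall>l \<in> {1..L}. \<alpha> l > 0\<close> and L = \<open>L \<ge> 1\<close> and d = \<open>d > 0\<close> and k = \<open>k > 0\<close>
  let ?P = "\<lambda>l. Wdown a W \<beta> L (l + 1)" and ?Q = "\<lambda>l. Wup a W \<beta> 1 (l - 1)"
  have "\<forall>l \<in> {1..L}. W l \<in> carrier_mat (widths L d k m l) (widths L d k m (l - 1))"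
    using \<open>\<forall>l \<in> {1..L}. W l \<in> carrier_mat (a l) (a (l - 1))\<close> unfolding a_def .
  note factors = residual_network_factors[where \<beta> = \<beta>, OF L d k \<open>m > max d k\<close> this, folded a_def]
  have ls: "distinct [1..<Suc L]" "[1..<Suc L] \<noteq> []" and set_ls: "set [1..<Suc L] = {1..L}"
    using L by auto
  have G_eq: "G = foldr (+) (map (\<lambda>l. kron (?P l * transpose_mat (?P l))
      (psd_sqrt d \<Sigma> * ?Q l * transpose_mat (?Q l) * psd_sqrt d \<Sigma>)) [1..<Suc L]) (0\<^sub>m (k * d) (k * d))"
    unfolding G_def using factors(2,5) by (intro arg_cong[where f = "\<lambda>xs. foldr (+) xs _"] map_cong) auto
  have "\<And>l. l \<in> set [1..<Suc L] \<Longrightarrow> ?P l \<in> carrier_mat k (a l) \<and> (k < a l \<or> ?P l = 1\<^sub>m k)"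
    "\<And>l. l \<in> set [1..<Suc L] \<Longrightarrow> ?Q l \<in> carrier_mat d (a (l - 1)) \<and> (d < a (l - 1) \<or> ?Q l = 1\<^sub>m d)"
    "\<And>l. l \<in> set [1..<Suc L] \<Longrightarrow> 0 < \<alpha> l"
    using factors(1,3,4,6) \<alpha>_pos by (simp_all only: set_ls)
  note bound = kron_gram_sum_kappa_le_weighted[where P = ?P and Q = ?Q and p = a and q = "\<lambda>l. a (l - 1)",
      OF \<Sigma> d k ls this[unfolded \<alpha>_def], folded G_eq, unfolded set_ls]
  have "kappa_spd G \<le> kappa_spd \<Sigma> * (\<Sum>l = 1..L. \<gamma> l * (kappa_rect (?P l))\<^sup>2 * (kappa_rect (?Q l))\<^sup>2)"
    using bound(2) unfolding \<gamma>_def \<alpha>_def by simp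
  moreover have "(\<Sum>l = 1..L. \<gamma> l * (kappa_rect (?P l))\<^sup>2 * (kappa_rect (?Q l))\<^sup>2)
      \<le> Max ((\<lambda>l. (kappa_rect (?P l))\<^sup>2 * (kappa_rect (?Q l))\<^sup>2) ` {1..L})"
    using weighted_average_le_Max[of "{1..L}" \<alpha>] \<alpha>_pos L unfolding \<gamma>_def by (simp add: mult.assoc)
  ultimately show ?thesis using bound(1) mult_left_mono[OF _ kappa_spd_nonneg[OF \<Sigma> d]] by simp
qed

end
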